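(* Let $I\subset\mathbb R$ be a non-trivial compact interval and $\varphi\in\hat{\mathcal C}_{\mathbb R}(\overline{\mathbb C}\setminus I)$. Then (i) $\mathrm{Re}\,(\sum_Z\varphi)$ is bounded on $\mathbb H^+$ and the function it defines on $\mathbb H^+/\mathbb Z$ extends continuously to $\widehat{\mathbb H^+/\mathbb Z}$; (ii) $\sup_{\mathbb H^+}|\mathrm{Re}\sum_Z\varphi|\le C\sup_{\mathbb H^+}|\mathrm{Re}\,\varphi|$ for a constant $C$ depending only on $I$.
   Context: For $\varphi$ holomorphic on $\mathbb C\setminus I$ and vanishing at $\infty$, $\sum_Z\varphi(z):=\lim_{N\to\infty}\sum_{n=-N}^N\varphi(z-n)$ for $z\in\mathbb C\setminus\mathbb R$ (it is holomorphic and $1$-periodic). The space $\hat{\mathbb H}^+=\mathbb H^+\sqcup(\mathbb R\setminus\mathbb Q)\sqcup(\overline{\mathbb Q}\times[-\pi/2,\pi/2])$ ($\overline{\mathbb Q}=\mathbb Q\cup\{\infty\}$) has the topology with fundamental systems of neighbourhoods ($\varepsilon>0$ small): (a) at $z_0\in\mathbb H^+$, Euclidean discs; (b) at irrational $\alpha_0$: $\{z\in\mathbb H^+:|z-\alpha_0|<\varepsilon\}\cup\{\alpha\in\mathbb R\setminus\mathbb Q:|\alpha-\alpha_0|<\varepsilon\}\cup\{(\alpha,\theta):\alpha\in\mathbb Q,|\alpha-\alpha_0|<\varepsilon\}$; (c) at $(\alpha_0,\pi/2)$, $\alpha_0\in\mathbb Q$: $\{z\in\mathbb H^+:|z-\alpha_0|<\varepsilon,\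 0<\arg(z-\alpha_0)<\varepsilon\}\cup\{\alpha\in\mathbb R\setminus\mathbb Q:0<\alpha-\alpha_0<\varepsilon\}\cup\{(\alpha,\theta):\alpha\in\mathbb Q,0<\alpha-\alpha_0<\varepsilon\}\cup\{(\alpha_0,\theta):\pi/2-\varepsilon<\theta\le\pi/2\}$, and at $(\alpha_0,-\pi/2)$: $\{z\in\mathbb H^+:|z-\alpha_0|<\varepsilon,\ \pi-\varepsilon<\arg(z-\alpha_0)<\pi\}\cup\{\alpha\in\mathbb R\setminus\mathbb Q:0<\alpha_0-\alpha<\varepsilon\}\cup\{(\alpha,\theta):\alpha\in\mathbb Q,0<\alpha_0-\alpha<\varepsilon\}\cup\{(\alpha_0,\theta):-\pi/2\le\theta<-\pi/2+\varepsilon\}$; (d) at $(\alpha_0,\theta_0)$, $\alpha_0\in\mathbb Q$, $|\theta_0|<\pi/2$: $\{z\in\mathbb H^+:|z-\alpha_0|<\varepsilon,\ |\pi/2-\arg(z-\alpha_0)-\theta_0|<\varepsilon\}\cup\{(\alpha_0,\theta):|\theta-\theta_0|<\varepsilon\}$; (e),(f) analogous neighbourhoods at the points $(\infty,\theta)$ (not needed below). $\widehat{\mathbb H^+/\mathbb Z}$ is the compactification of $\mathbb H^+/\mathbb Z$ obtained by taking the quotient of $\mathbb H^+\sqcup(\mathbb R\setminus\mathbb Q)\sqcup(\mathbb Q\times[-\pi/2,\pi/2])\subset\hat{\mathbb H}^+$ by the translations $z\mapsto z+1$, $\alpha\mapsto\alpha+1$, $(\alpha,\theta)\mapsto(\alpha+1,\theta)$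 (with the quotient topology) and adding a point $i\infty$ whose neighbourhoods are $\{i\infty\}\cup\{\mathrm{Im}\,z>M\}/\mathbb Z$; it is homeomorphic to a closed disc. $\hat{\mathcal C}_{\mathbb R}(\overline{\mathbb C}\setminus I)$ is the space of functions $\varphi$ holomorphic on $\mathbb C\setminus I$, vanishing at $\infty$, real ($\varphi(\bar z)=\overline{\varphi(z)}$), whose real part on $\mathbb H^+$ extends continuously to $\hat{\mathbb H}^+$. *)

theory Defs
  imports "HOL-Analysis.Analysis"
begin

text \<open>Points of the finite part of the space hat-H+ :
  Up z (z in the upper half plane), Irr a (a irrational),
  RatP a th (a rational, th in [-pi/2, pi/2]).\<close>
datatype hpt = Up complex | Irr real | RatP real real

definition hvalid :: "hpt \<Rightarrow> bool" where
  "hvalid p = (case p of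
      Up z \<Rightarrow> Im z > 0
    | Irr a \<Rightarrow> a \<notin> \<rat>
    | RatP a th \<Rightarrow> a \<in> \<rat> \<and> - (pi/2) \<le> th \<and> th \<le> pi/2)"

definition hnbhd :: "hpt \<Rightarrow> real \<Rightarrow> hpt set" where
  "hnbhd p e = {q. hvalid q \<and> (case p of
      Up z0 \<Rightarrow> (\<exists>z. q = Up z \<and> cmod (z - z0) < e)
    | Irr a0 \<Rightarrow>
        (\<exists>z. q = Up z \<and> cmod (z - complex_of_real a0) < e)
      \<or> (\<exists>a. q = Irr a \<and> \<bar>a - a0\<bar> < e)
      \<or> (\<exists>a th. q = RatP a th \<and> \<bar>a - a0\<bar> < e)
    | RatP a0 th0 \<Rightarrow>
        (if th0 = pi/2 then
            (\<exists>z. q = Up z \<and> cmod (z - complex_of_real a0) < e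
                 \<and> 0 < Arg (z - complex_of_real a0) \<and> Arg (z - complex_of_real a0) < e)
          \<or> (\<exists>a. q = Irr a \<and> 0 < a - a0 \<and> a - a0 < e)
          \<or> (\<exists>a th. q = RatP a th \<and> 0 < a - a0 \<and> a - a0 < e)
          \<or> (\<exists>th. q = RatP a0 th \<and> pi/2 - e < th \<and> th \<le> pi/2)
         else if th0 = - (pi/2) then
            (\<exists>z. q = Up z \<and> cmod (z - complex_of_real a0) < e
                 \<and> pi - e < Arg (z - complex_of_real a0) \<and> Arg (z - complex_of_real a0) < pi)
          \<or> (\<exists>a. q = Irr a \<and> 0 < a0 - a \<and> a0 - a < e)
          \<or> (\<exists>a th. q = RatP a th \<and> 0 < a0 - a \<and> a0 - a < e)
          \<or> (\<exists>th. q = RatP a0 th \<and> - (pi/2) \<le> th \<and> th < - (pi/2) + e)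
         else
            (\<exists>z. q = Up z \<and> cmod (z - complex_of_real a0) < e
                 \<and> \<bar>pi/2 - Arg (z - complex_of_real a0) - th0\<bar> < e)
          \<or> (\<exists>th. q = RatP a0 th \<and> \<bar>th - th0\<bar> < e)))}"

definition hcont_at :: "(hpt \<Rightarrow> real) \<Rightarrow> hpt \<Rightarrow> bool" where
  "hcont_at F p = (\<forall>r>0. \<exists>e>0. \<forall>q\<in>hnbhd p e. \<bar>F q - F p\<bar> < r)"

fun hshift :: "hpt \<Rightarrow> hpt" where
  "hshift (Up z) = Up (z + 1)"
| "hshift (Irr a) = Irr (a + 1)"
| "hshift (RatP a th) = RatP (a + 1) th"

definition ChatR :: "real \<Rightarrow> real \<Rightarrow> (complex \<Rightarrow> complex) set" where
  "ChatR a b = {\<phi>.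
      \<phi> holomorphic_on (- (complex_of_real ` {a..b}))
    \<and> (\<phi> \<longlongrightarrow> 0) at_infinity
    \<and> (\<forall>z. z \<notin> complex_of_real ` {a..b} \<longrightarrow> \<phi> (cnj z) = cnj (\<phi> z))
    \<and> (\<exists>F. (\<forall>z. Im z > 0 \<longrightarrow> F (Up z) = Re (\<phi> z))
           \<and> (\<forall>p. hvalid p \<longrightarrow> hcont_at F p))}"

definition sumZ_part :: "(complex \<Rightarrow> complex) \<Rightarrow> complex \<Rightarrow> nat \<Rightarrow> complex" where
  "sumZ_part \<phi> z N = (\<Sum>n = - int N..int N. \<phi> (z - of_int n))"

definition sumZ :: "(complex \<Rightarrow> complex) \<Rightarrow> complex \<Rightarrow> complex" where
  "sumZ \<phi> z = lim (sumZ_part \<phi> z)"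

end

(* Near infinity phi(w) = c/w + O(|w|^-2) with c real. Applying the Schwarz lemma to
   u -> phi(1/u), whose real part is bounded by M = sup |Re phi|, shows that |c| and the
   O-constant are O(M); the imaginary part is controlled through the Cayley transform of
   exp(i k phi(1/u)). Grouping the terms n and -n, Re (phi(z - n) + phi(z + n)) is
   O(M / (n^2 + (Im z)^2)) uniformly on vertical strips. This gives convergence, the bound
   (after translating z into |Re z| <= 1/2) and the limit 0 as Im z -> infinity.
   The extension to the compactification is the same symmetric sum applied to the continuous
   extension F of Re phi: finitely many translates of F are continuous there, and the remaining
   tail is a uniform limit of continuous functions of the position. Translation invariance holds
   because F vanishes at infinity, and Re phi is bounded on the upper half plane because F is
   locally bounded, which at rational points uses compactness of the interval of angles. *)

theory Submission
  imports Defs "HOL-Complex_Analysis.Complex_Analysis"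
begin

section \<open>Points of the compactification\<close>

fun hpt_pos :: "hpt \<Rightarrow> complex" where
  "hpt_pos (Up z) = z"
| "hpt_pos (Irr a) = of_real a"
| "hpt_pos (RatP a th) = of_real a"

fun hpt_translate :: "int \<Rightarrow> hpt \<Rightarrow> hpt" where
  "hpt_translate k (Up z) = Up (z + of_int k)"
| "hpt_translate k (Irr a) = Irr (a + of_int k)"
| "hpt_translate k (RatP a th) = RatP (a + of_int k) th"

lemma hvalid_translate [simp]: "hvalid (hpt_translate k p) = hvalid p"
  by (cases p) (auto simp: hvalid_def Rats_add_iff)

lemma hvalid_Up [simp]: "hvalid (Up z) = (Im z > 0)"
  by (simp add: hvalid_def)

lemma hpt_pos_translate [simp]: "hpt_pos (hpt_translate k p) = hpt_pos p + of_int k"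
  by (cases p) auto

lemma hpt_translate_0 [simp]: "hpt_translate 0 p = p"
  by (cases p) auto

lemma hpt_translate_translate [simp]:
  "hpt_translate k (hpt_translate l p) = hpt_translate (k + l) p"
  by (cases p) (auto simp: algebra_simps)

lemma hshift_eq_translate: "hshift p = hpt_translate 1 p"
  by (cases p) auto

lemma hnbhd_imp_hvalid: "q \<in> hnbhd p e \<Longrightarrow> hvalid q"
  by (simp add: hnbhd_def)

lemma hnbhd_imp_dist_pos: "q \<in> hnbhd p e \<Longrightarrow> e > 0 \<Longrightarrow> cmod (hpt_pos q - hpt_pos p) < e"
  unfolding hnbhd_def
  by (cases p; cases q) (auto split: if_splits simp: norm_minus_commute abs_minus_commute
      simp flip: of_real_diff)

lemma hnbhd_mono: "q \<in> hnbhd p e \<Longrightarrow> e \<le> e' \<Longrightarrow> q \<in> hnbhd p e'"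
  unfolding hnbhd_def by (cases p; cases q) (auto split: if_splits)

lemma hnbhd_translate:
  assumes "q \<in> hnbhd p e"
  shows "hpt_translate k q \<in> hnbhd (hpt_translate k p) e"
proof -
  have "z + of_int k - complex_of_real (a + of_int k) = z - complex_of_real a" for z a
    by simp
  then show ?thesis
    using assms unfolding hnbhd_def
    by (cases p; cases q) (auto split: if_splits simp: hvalid_def Rats_add_iff)
qed

lemma Up_mem_hnbhd_RatP:
  assumes "Im z > 0" "cmod (z - of_real a) < e" "\<bar>pi/2 - Arg (z - of_real a) - th\<bar> < e"
    and "a \<in> \<rat>" "-(pi/2) \<le> th" "th \<le> pi/2"
  shows "Up z \<in> hnbhd (RatP a th) e"
proof -
  have A: "0 < Arg (z - of_real a)" "Arg (z - of_real a) < pi"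
    using assms(1) Arg_lt_pi[of "z - of_real a"] by simp_all
  then have B: "(th = pi/2 \<longrightarrow> Arg (z - of_real a) < e)"
    and C: "(th = -(pi/2) \<longrightarrow> pi - e < Arg (z - of_real a))"
    using assms(3) by linarith+
  have "hvalid (Up z)" using assms by simp
  show ?thesis
    unfolding hnbhd_def mem_Collect_eq hpt.case if_split
    using A B C assms(1-3) \<open>hvalid (Up z)\<close> by blast
qed

lemma exists_Up_mem_hnbhd:
  assumes "hvalid q" "e > 0"
  shows "\<exists>z. Up z \<in> hnbhd q e"
proof (cases q)
  case (Up z)
  then show ?thesis using assms by (auto simp: hnbhd_def intro!: exI[of _ z])
next
  case (Irr a)
  define z where "z = of_real a + \<i> * of_real (e/2)"
  have "Im z > 0" "cmod (z - of_real a) < e"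
    using assms by (auto simp: z_def norm_mult)
  then show ?thesis using Irr assms by (auto simp: hnbhd_def hvalid_def intro!: exI[of _ z])
next
  case (RatP a th)
  have th: "-(pi/2) \<le> th" "th \<le> pi/2" "a \<in> \<rat>" using assms RatP by (auto simp: hvalid_def)
  \<comment> \<open>the direction \<open>pi/2 - th\<close>, moved by less than \<open>e\<close> into the open interval \<open>(0, pi)\<close>\<close>
  define al where "al = min (max (pi/2 - th) (min (e/2) (pi/2))) (max (pi - e/2) (pi/2))"
  have al: "0 < al" "al < pi" "\<bar>pi/2 - al - th\<bar> < e"
    using th assms(2) pi_gt3 by (auto simp: al_def min_def max_def)
  define z where "z = of_real a + rcis (e/2) al"
  have "Arg (z - of_real a) = al" "Im z > 0" "cmod (z - of_real a) < e"
    using al assms(2) by (auto simp: z_def sin_gt_zero intro!: Arg_unique'[of "e/2"])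
  then show ?thesis using Up_mem_hnbhd_RatP[of z a e th] al th RatP by auto
qed

lemma hcont_at_translate:
  assumes "hcont_at F (hpt_translate k p)"
  shows "hcont_at (\<lambda>q. F (hpt_translate k q)) p"
  unfolding hcont_at_def
proof (intro allI impI)
  fix r :: real assume "r > 0"
  then obtain e where "e > 0" "\<forall>q\<in>hnbhd (hpt_translate k p) e. \<bar>F q - F (hpt_translate k p)\<bar> < r"
    using assms unfolding hcont_at_def by blast
  then show "\<exists>e>0. \<forall>q\<in>hnbhd p e. \<bar>F (hpt_translate k q) - F (hpt_translate k p)\<bar> < r"
    by (metis hnbhd_translate)
qed

lemma hcont_at_add:
  assumes "hcont_at F p" "hcont_at G p"
  shows "hcont_at (\<lambda>q. F q + G q) p"
  unfolding hcont_at_def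
proof (intro allI impI)
  fix r :: real assume "r > 0"
  then have "r/2 > 0"
    by simp
  then obtain e1 e2 where e: "e1 > 0" "\<forall>q\<in>hnbhd p e1. \<bar>F q - F p\<bar> < r/2"
    "e2 > 0" "\<forall>q\<in>hnbhd p e2. \<bar>G q - G p\<bar> < r/2"
    using assms unfolding hcont_at_def by blast
  show "\<exists>e>0. \<forall>q\<in>hnbhd p e. \<bar>F q + G q - (F p + G p)\<bar> < r"
  proof (intro exI[of _ "min e1 e2"] conjI ballI)
    fix q assume "q \<in> hnbhd p (min e1 e2)"
    then have "q \<in> hnbhd p e1" "q \<in> hnbhd p e2"
      by (auto intro: hnbhd_mono)
    then have "\<bar>F q - F p\<bar> < r/2" "\<bar>G q - G p\<bar> < r/2"
      using e by blast+
    then show "\<bar>F q + G q - (F p + G p)\<bar> < r"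
      by linarith
  qed (use e in simp)
qed

lemma hcont_at_const: "hcont_at (\<lambda>q. c) p"
  unfolding hcont_at_def by (auto intro: exI[of _ 1])

lemma hcont_at_sum:
  assumes "finite S" "\<And>i. i \<in> S \<Longrightarrow> hcont_at (F i) p"
  shows "hcont_at (\<lambda>q. \<Sum>i\<in>S. F i q) p"
  using assms by (induction S rule: finite_induct) (simp_all add: hcont_at_add hcont_at_const)

lemma hcont_at_compose_pos:
  assumes "isCont H (hpt_pos p)"
  shows "hcont_at (\<lambda>q. H (hpt_pos q)) p"
  unfolding hcont_at_def
proof (intro allI impI)
  fix r :: real assume "r > 0"
  then obtain d where "d > 0" "\<And>w. dist w (hpt_pos p) < d \<Longrightarrow> dist (H w) (H (hpt_pos p)) < r"
    using assms unfolding continuous_at_eps_delta by blast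
  then show "\<exists>e>0. \<forall>q\<in>hnbhd p e. \<bar>H (hpt_pos q) - H (hpt_pos p)\<bar> < r"
    using hnbhd_imp_dist_pos by (intro exI[of _ d]) (simp add: dist_norm)
qed

lemma hcont_at_cong:
  assumes "hcont_at F p" "e0 > 0" "\<And>q. q \<in> hnbhd p e0 \<Longrightarrow> G q = F q" "G p = F p"
  shows "hcont_at G p"
  unfolding hcont_at_def
proof (intro allI impI)
  fix r :: real assume "r > 0"
  then obtain e where "e > 0" "\<forall>q\<in>hnbhd p e. \<bar>F q - F p\<bar> < r"
    using assms(1) unfolding hcont_at_def by blast
  then show "\<exists>e>0. \<forall>q\<in>hnbhd p e. \<bar>G q - G p\<bar> < r"
  proof (intro exI[of _ "min e e0"] conjI ballI)
    fix q assume "q \<in> hnbhd p (min e e0)"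
    then have "q \<in> hnbhd p e" "q \<in> hnbhd p e0"
      by (auto intro: hnbhd_mono)
    then show "\<bar>G q - G p\<bar> < r"
      using \<open>\<forall>q\<in>hnbhd p e. \<bar>F q - F p\<bar> < r\<close> assms(3,4) by simp
  qed (use \<open>e > 0\<close> assms(2) in simp)
qed

lemma hcont_at_imp_LIMSEQ:
  assumes "hcont_at F p" "\<And>n. q n \<in> hnbhd p (1 / Suc n)"
  shows "(\<lambda>n. F (q n)) \<longlonglongrightarrow> F p"
proof (rule LIMSEQ_I)
  fix r :: real assume "r > 0"
  then obtain e where e: "e > 0" "\<forall>q\<in>hnbhd p e. \<bar>F q - F p\<bar> < r"
    using assms(1) unfolding hcont_at_def by blast
  then obtain N where "1 / Suc N < e"
    using nat_approx_posE by blast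
  have "q n \<in> hnbhd p e" if "n \<ge> N" for n
  proof (rule hnbhd_mono[OF assms(2)])
    have "1 / real (Suc n) \<le> 1 / real (Suc N)"
      using that by (intro inverse_of_nat_le) auto
    then show "1 / real (Suc n) \<le> e"
      using \<open>1 / Suc N < e\<close> by linarith
  qed
  then show "\<exists>N. \<forall>n\<ge>N. norm (F (q n) - F p) < r"
    using e(2) by auto
qed

lemma hnbhd_imp_LIMSEQ_pos:
  assumes "\<And>n. q n \<in> hnbhd p (1 / Suc n)"
  shows "(\<lambda>n. hpt_pos (q n)) \<longlonglongrightarrow> hpt_pos p"
  using LIMSEQ_norm_0[of "\<lambda>n. hpt_pos (q n) - hpt_pos p"] hnbhd_imp_dist_pos[OF assms]
  by (simp add: LIM_zero_iff)

lemma hcont_at_boundary_value: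
  assumes "hvalid q" "hcont_at F q" "isCont \<phi> (hpt_pos q)"
    and "\<And>z. Im z > 0 \<Longrightarrow> F (Up z) = Re (\<phi> z)"
  shows "F q = Re (\<phi> (hpt_pos q))"
proof -
  have "\<forall>n. \<exists>z. Up z \<in> hnbhd q (1 / Suc n)"
    using exists_Up_mem_hnbhd[OF assms(1)] by simp
  then obtain z where z: "\<And>n. Up (z n) \<in> hnbhd q (1 / Suc n)"
    by (metis choice)
  have "F (Up (z n)) = Re (\<phi> (z n))" for n
    using hnbhd_imp_hvalid[OF z] assms(4) by simp
  moreover have "z \<longlonglongrightarrow> hpt_pos q"
    using hnbhd_imp_LIMSEQ_pos[OF z] by simp
  then have "(\<lambda>n. Re (\<phi> (z n))) \<longlonglongrightarrow> Re (\<phi> (hpt_pos q))"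
    by (intro tendsto_Re isCont_tendsto_compose[OF assms(3)])
  ultimately have "(\<lambda>n. F (Up (z n))) \<longlonglongrightarrow> Re (\<phi> (hpt_pos q))"
    by simp
  then show ?thesis
    using hcont_at_imp_LIMSEQ[OF assms(2) z] by (rule LIMSEQ_unique[symmetric])
qed

lemma compact_uniform_local_bound:
  fixes K :: "'a::metric_space set" and f :: "'b \<Rightarrow> real"
  assumes "compact K"
    and local: "\<And>x. x \<in> K \<Longrightarrow> \<exists>e>0. \<exists>B. \<forall>y\<in>ball x e. \<forall>v. P e y v \<longrightarrow> f v \<le> B"
    and mono: "\<And>e e' y v. P e y v \<Longrightarrow> e \<le> e' \<Longrightarrow> P e' y v"
  shows "\<exists>d>0. \<exists>B. \<forall>y\<in>K. \<forall>v. P d y v \<longrightarrow> f v \<le> B"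
proof -
  obtain E Bd where E: "\<And>x. x \<in> K \<Longrightarrow> E x > 0"
    and Bd: "\<And>x y v. x \<in> K \<Longrightarrow> y \<in> ball x (E x) \<Longrightarrow> P (E x) y v \<Longrightarrow> f v \<le> Bd x"
    using local by metis
  obtain T where T: "T \<subseteq> K" "finite T" "K \<subseteq> (\<Union>x\<in>T. ball x (E x))"
  proof (rule compactE_image[OF assms(1), of K "\<lambda>x. ball x (E x)"])
    show "K \<subseteq> (\<Union>x\<in>K. ball x (E x))"
      using E by force
  qed auto
  define d where "d = Min (insert 1 (E ` T))"
  define B where "B = Max (insert 0 (Bd ` T))"
  have "d > 0"
    using T E by (auto simp: d_def)
  moreover have "f v \<le> B" if "y \<in> K" "P d y v" for y v
  proof -
    obtain x where x: "x \<in> T" "y \<in> ball x (E x)"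
      using T(3) \<open>y \<in> K\<close> by blast
    have "P (E x) y v"
      using mono[OF \<open>P d y v\<close>] x T(2) by (simp add: d_def)
    then have "f v \<le> Bd x"
      using Bd x T(1) by blast
    also have "\<dots> \<le> B"
      using x T(2) by (simp add: B_def)
    finally show ?thesis .
  qed
  ultimately show ?thesis
    by blast
qed

text \<open>At a rational point the basic neighbourhoods depend on the angle; compactness of the
  interval of angles yields one radius for all of them.\<close>
lemma hcont_bounded_near_rational:
  assumes cont: "\<forall>p. hvalid p \<longrightarrow> hcont_at F p" and "x \<in> \<rat>"
  shows "\<exists>d>0. \<exists>B. \<forall>z. Im z > 0 \<and> cmod (z - of_real x) < d \<longrightarrow> \<bar>F (Up z)\<bar> \<le> B"
proof -
  let ?P = "\<lambda>d th z. Im z > 0 \<and> cmod (z - of_real x) < d \<and> th = pi/2 - Arg (z - of_real x)"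
  have "\<exists>d>0. \<exists>B. \<forall>th\<in>{-(pi/2)..pi/2}. \<forall>z. ?P d th z \<longrightarrow> \<bar>F (Up z)\<bar> \<le> B"
  proof (rule compact_uniform_local_bound[OF compact_Icc])
    fix th0 assume th0: "th0 \<in> {-(pi/2)..pi/2}"
    then have "hcont_at F (RatP x th0)"
      using cont \<open>x \<in> \<rat>\<close> by (simp add: hvalid_def)
    then obtain e where e: "e > 0" "\<forall>q\<in>hnbhd (RatP x th0) e. \<bar>F q - F (RatP x th0)\<bar> < 1"
      unfolding hcont_at_def using zero_less_one by blast
    have "\<bar>F (Up z)\<bar> \<le> \<bar>F (RatP x th0)\<bar> + 1" if "th \<in> ball th0 e" "?P e th z" for th z
    proof -
      have "Up z \<in> hnbhd (RatP x th0) e"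
        using that th0 \<open>x \<in> \<rat>\<close> by (intro Up_mem_hnbhd_RatP) (auto simp: dist_real_def abs_minus_commute)
      then show ?thesis
        using e(2) by fastforce
    qed
    then show "\<exists>e>0. \<exists>B. \<forall>th\<in>ball th0 e. \<forall>z. ?P e th z \<longrightarrow> \<bar>F (Up z)\<bar> \<le> B"
      using e(1) by blast
  qed auto
  then obtain d B where "d > 0" and dB: "\<And>th z. th \<in> {-(pi/2)..pi/2} \<Longrightarrow> ?P d th z \<Longrightarrow> \<bar>F (Up z)\<bar> \<le> B"
    by blast
  have "\<bar>F (Up z)\<bar> \<le> B" if "Im z > 0" "cmod (z - of_real x) < d" for z
  proof (rule dB)
    have "0 < Arg (z - of_real x)" "Arg (z - of_real x) < pi"
      using that(1) Arg_lt_pi[of "z - of_real x"] by simp_all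
    then show "pi/2 - Arg (z - of_real x) \<in> {-(pi/2)..pi/2}"
      by simp
  qed (use that in simp)
  then show ?thesis
    using \<open>d > 0\<close> by blast
qed

lemma hcont_bounded_near_real:
  assumes cont: "\<forall>p. hvalid p \<longrightarrow> hcont_at F p"
  shows "\<exists>d>0. \<exists>B. \<forall>z. Im z > 0 \<and> cmod (z - of_real x) < d \<longrightarrow> \<bar>F (Up z)\<bar> \<le> B"
proof (cases "x \<in> \<rat>")
  case False
  then have "hcont_at F (Irr x)"
    using cont by (simp add: hvalid_def)
  then obtain e where e: "e > 0" "\<forall>q\<in>hnbhd (Irr x) e. \<bar>F q - F (Irr x)\<bar> < 1"
    unfolding hcont_at_def using zero_less_one by blast
  have "Up z \<in> hnbhd (Irr x) e" if "Im z > 0" "cmod (z - of_real x) < e" for z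
    using that by (simp add: hnbhd_def)
  then have "\<bar>F (Up z)\<bar> \<le> \<bar>F (Irr x)\<bar> + 1" if "Im z > 0" "cmod (z - of_real x) < e" for z
    using e(2) that by fastforce
  then show ?thesis
    using e(1) by blast
qed (use hcont_bounded_near_rational[OF cont] in blast)

section \<open>Schwarz lemma estimates\<close>

lemma Schwarz_Lemma_ball_strict:
  fixes f :: "complex \<Rightarrow> complex"
  assumes holf: "f holomorphic_on ball 0 r" and f0: "f 0 = 0"
    and bound: "\<And>z. z \<in> ball 0 r \<Longrightarrow> norm (f z) < B" and \<xi>: "norm \<xi> < r"
  shows "norm (f \<xi>) \<le> B * norm \<xi> / r" and "norm (deriv f 0) \<le> B / r"
proof -
  have "r > 0"
    using \<xi> norm_ge_zero[of \<xi>] by linarith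
  then have "B > 0"
    using bound[of 0] f0 by simp
  define h where "h v = f (of_real r * v) / of_real B" for v
  have ball: "of_real r * v \<in> ball 0 r" if "norm v < 1" for v :: complex
    using that \<open>r > 0\<close> by (simp add: norm_mult)
  have hol: "h holomorphic_on ball 0 1"
    unfolding h_def using ball \<open>B > 0\<close>
    by (intro holomorphic_intros holomorphic_on_compose_gen[OF _ holf, unfolded o_def]) auto
  have less: "norm (h v) < 1" if "norm v < 1" for v
    using bound[OF ball[OF that]] \<open>B > 0\<close> by (simp add: h_def norm_divide)
  have "norm (\<xi> / of_real r) < 1"
    using \<xi> \<open>r > 0\<close> by (simp add: norm_divide)
  note Schwarz = Schwarz_Lemma[of h, OF hol _ less this]
  have "(f has_field_derivative deriv f 0) (at (of_real r * 0))"
    using holf \<open>r > 0\<close> by (auto intro: holomorphic_derivI)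
  then have "(h has_field_derivative deriv f 0 * of_real r / of_real B) (at 0)"
    unfolding h_def using \<open>B > 0\<close> by (auto intro!: derivative_eq_intros DERIV_chain2[where f = f])
  then have "deriv h 0 = deriv f 0 * of_real r / of_real B"
    by (rule DERIV_imp_deriv)
  then have "norm (deriv f 0) * r / B \<le> 1"
    using Schwarz(2) f0 \<open>r > 0\<close> \<open>B > 0\<close> by (simp add: h_def norm_divide norm_mult)
  then show "norm (deriv f 0) \<le> B / r"
    using \<open>r > 0\<close> \<open>B > 0\<close> by (simp add: field_simps)
  have "h (\<xi> / of_real r) = f \<xi> / of_real B"
    using \<open>r > 0\<close> by (simp add: h_def)
  then show "norm (f \<xi>) \<le> B * norm \<xi> / r"
    using Schwarz(1) f0 \<open>r > 0\<close> \<open>B > 0\<close> by (simp add: h_def norm_divide field_simps)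
qed

lemma Schwarz_Lemma_ball:
  fixes f :: "complex \<Rightarrow> complex"
  assumes holf: "f holomorphic_on ball 0 r" and f0: "f 0 = 0"
    and bound: "\<And>z. z \<in> ball 0 r \<Longrightarrow> norm (f z) \<le> B" and \<xi>: "norm \<xi> < r"
  shows "norm (f \<xi>) \<le> B * norm \<xi> / r" and "norm (deriv f 0) \<le> B / r"
proof -
  have "r > 0"
    using \<xi> norm_ge_zero[of \<xi>] by linarith
  have strict: "norm (f \<xi>) \<le> B' * norm \<xi> / r \<and> norm (deriv f 0) \<le> B' / r" if "B < B'" for B'
    using Schwarz_Lemma_ball_strict[OF holf f0 _ \<xi>, of B'] bound that by fastforce
  show "norm (f \<xi>) \<le> B * norm \<xi> / r"
  proof (cases "\<xi> = 0")
    case False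
    show ?thesis
    proof (rule dense_ge)
      fix y assume "B * norm \<xi> / r < y"
      then have "B < y * r / norm \<xi>" "y * r / norm \<xi> * norm \<xi> / r = y"
        using \<open>r > 0\<close> False by (simp_all add: field_simps)
      then show "norm (f \<xi>) \<le> y"
        using strict by metis
    qed
  qed (use f0 in simp)
  show "norm (deriv f 0) \<le> B / r"
  proof (rule dense_ge)
    fix y assume "B / r < y"
    then have "B < y * r" "y * r / r = y"
      using \<open>r > 0\<close> by (simp_all add: field_simps)
    then show "norm (deriv f 0) \<le> y"
      using strict by metis
  qed
qed

lemma Schwarz_Lemma_ball_second_order:
  fixes f :: "complex \<Rightarrow> complex"
  assumes holf: "f holomorphic_on ball 0 r" and f0: "f 0 = 0"
    and bound: "\<And>z. z \<in> ball 0 r \<Longrightarrow> norm (f z) \<le> B" and u: "norm u < r"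
  shows "norm (f u - deriv f 0 * u) \<le> 2 * B * (norm u)\<^sup>2 / r\<^sup>2"
proof -
  have "r > 0"
    using u norm_ge_zero[of u] by linarith
  obtain h where holh: "h holomorphic_on ball 0 r"
    and h: "\<And>z. norm z < r \<Longrightarrow> f z = z * h z" and h0: "deriv f 0 = h 0"
    using Schwarz3[OF holf f0] by metis
  note Schwarz = Schwarz_Lemma_ball[OF holf f0 bound]
  have h_bound: "norm (h z) \<le> B / r" if "z \<in> ball 0 r" for z
  proof (cases "z = 0")
    case False
    have "norm z * norm (h z) = norm (f z)"
      using h[of z] that by (simp add: norm_mult)
    also have "\<dots> \<le> norm z * (B / r)"
      using Schwarz(1)[of z] that by (simp add: mult.commute)
    finally have "norm z * norm (h z) \<le> norm z * (B / r)" .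
    then show ?thesis
      using False by (subst (asm) mult_le_cancel_left_pos) auto
  qed (use Schwarz(2)[of 0] h0 \<open>r > 0\<close> in simp)
  have "norm (h z - h 0) \<le> 2 * B / r" if "z \<in> ball 0 r" for z
    using h_bound[OF that] h_bound[of 0] \<open>r > 0\<close> norm_triangle_ineq4[of "h z" "h 0"] by simp
  then have "norm (h u - h 0) \<le> 2 * B / r * norm u / r"
    by (intro Schwarz_Lemma_ball(1)[of "\<lambda>z. h z - h 0"] holomorphic_intros holh u) auto
  have "f u - deriv f 0 * u = u * (h u - h 0)"
    using h[OF u] h0 by (simp add: algebra_simps)
  then have "norm (f u - deriv f 0 * u) = norm u * norm (h u - h 0)"
    by (simp add: norm_mult)
  also have "\<dots> \<le> norm u * (2 * B / r * norm u / r)"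
    using \<open>norm (h u - h 0) \<le> _\<close> by (rule mult_left_mono) simp
  also have "\<dots> = 2 * B * (norm u)\<^sup>2 / r\<^sup>2"
    by (simp add: power2_eq_square)
  finally show ?thesis .
qed

lemma norm_cayley_less_one:
  fixes z :: complex
  assumes "Re z > 0"
  shows "norm ((z - 1) / (z + 1)) < 1"
proof -
  have "(norm (z - 1))\<^sup>2 < (norm (z + 1))\<^sup>2"
    using assms unfolding cmod_power2 by (simp add: power2_eq_square algebra_simps)
  then have "norm (z - 1) < norm (z + 1)"
    by (rule power2_less_imp_less) simp
  then show ?thesis
    by (simp add: norm_divide divide_less_eq)
qed

lemma norm_less_three_of_cayley:
  fixes z :: complex
  assumes "z + 1 \<noteq> 0" and small: "norm ((z - 1) / (z + 1)) < 1/2"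
  shows "norm z < 3"
proof -
  define h where "h = (z - 1) / (z + 1)"
  have "norm h < 1/2"
    using small by (simp add: h_def)
  have "z * (1 - h) = 1 + h"
    using assms(1) by (simp add: h_def field_simps)
  then have "norm z * norm (1 - h) = norm (1 + h)"
    by (metis norm_mult)
  moreover have "1 - norm h \<le> norm (1 - h)" "norm (1 + h) \<le> 1 + norm h"
    using norm_triangle_ineq2[of 1 h] norm_triangle_ineq[of 1 h] by auto
  ultimately have "norm z * (1 - norm h) \<le> 1 + norm h"
    by (metis mult_left_mono norm_ge_zero order_trans)
  also have "\<dots> < 3 * (1 - norm h)"
    using \<open>norm h < 1/2\<close> by simp
  finally show ?thesis
    by (rule mult_right_less_imp_less) (use \<open>norm h < 1/2\<close> in simp)
qed

lemma cayley_inverse: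
  fixes z :: complex
  assumes "z \<noteq> 0" "z + 1 \<noteq> 0"
  shows "(inverse z - 1) / (inverse z + 1) = - ((z - 1) / (z + 1))"
proof -
  have "inverse z - 1 = (1 - z) * inverse z" "inverse z + 1 = (1 + z) * inverse z"
    using assms(1) by (simp_all add: algebra_simps)
  then show ?thesis
    using assms by (simp add: minus_divide_left add.commute)
qed

lemma three_less_exp_three_halves: "3 < exp (3/2 :: real)"
proof -
  have "(7/4) * (7/4) \<le> exp (3/4 :: real) * exp (3/4)"
    using exp_ge_add_one_self[of "3/4 :: real"] by (intro mult_mono) auto
  also have "\<dots> = exp (3/2)"
    by (simp flip: exp_add)
  finally show ?thesis
    by simp
qed

lemma abs_Im_less_of_abs_Re_less_pi_half:
  fixes g :: "complex \<Rightarrow> complex"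
  assumes holg: "g holomorphic_on ball 0 r" and g0: "g 0 = 0"
    and bound: "\<And>u. u \<in> ball 0 r \<Longrightarrow> \<bar>Re (g u)\<bar> < pi/2" and u: "norm u < r/2"
  shows "\<bar>Im (g u)\<bar> < 3/2"
proof -
  have "r > 0"
    using u norm_ge_zero[of u] by linarith
  \<comment> \<open>\<open>\<zeta>\<close> has positive real part, so its Cayley transform \<open>h\<close> maps the ball into the unit disc\<close>
  define \<zeta> where "\<zeta> v = exp (\<i> * g v)" for v
  have Re_\<zeta>: "Re (\<zeta> v) > 0" "Re (inverse (\<zeta> v)) > 0" if "v \<in> ball 0 r" for v
    using bound[OF that] by (simp_all add: \<zeta>_def exp_minus[symmetric] Re_exp cos_gt_zero_pi abs_less_iff)
  have nz: "\<zeta> v + 1 \<noteq> 0" "inverse (\<zeta> v) + 1 \<noteq> 0" if "v \<in> ball 0 r" for v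
    using Re_\<zeta>[OF that] by (auto simp: complex_eq_iff)
  define h where "h v = (\<zeta> v - 1) / (\<zeta> v + 1)" for v
  have "h holomorphic_on ball 0 r"
    unfolding h_def \<zeta>_def using nz by (intro holomorphic_intros holg) (auto simp: \<zeta>_def)
  moreover have "h 0 = 0"
    by (simp add: h_def \<zeta>_def g0)
  moreover have "norm (h v) \<le> 1" if "v \<in> ball 0 r" for v
    using norm_cayley_less_one[OF Re_\<zeta>(1)[OF that]] by (simp add: h_def)
  moreover have "norm u < r"
    using u \<open>r > 0\<close> by simp
  ultimately have "norm (h u) \<le> 1 * norm u / r"
    by (intro Schwarz_Lemma_ball(1)) auto
  also have "\<dots> < 1/2"
    using u \<open>r > 0\<close> by (simp add: field_simps)
  finally have small: "norm (h u) < 1/2" .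
  have "\<zeta> u \<noteq> 0"
    by (simp add: \<zeta>_def)
  then have "(inverse (\<zeta> u) - 1) / (inverse (\<zeta> u) + 1) = - h u"
    using cayley_inverse nz[of u] \<open>norm u < r\<close> by (simp add: h_def)
  then have "norm (\<zeta> u) < 3" "norm (inverse (\<zeta> u)) < 3"
    using norm_less_three_of_cayley small nz[of u] \<open>norm u < r\<close> by (auto simp: h_def)
  then have "exp (- Im (g u)) < 3" "exp (Im (g u)) < 3"
    by (simp_all add: \<zeta>_def norm_inverse exp_minus)
  then have "exp \<bar>Im (g u)\<bar> < 3"
    by (simp add: abs_if)
  then have "exp \<bar>Im (g u)\<bar> < exp (3/2)"
    using three_less_exp_three_halves by linarith
  then show ?thesis
    by simp
qed

lemma abs_Im_le_of_abs_Re_le: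
  fixes g :: "complex \<Rightarrow> complex"
  assumes holg: "g holomorphic_on ball 0 r" and g0: "g 0 = 0"
    and bound: "\<And>u. u \<in> ball 0 r \<Longrightarrow> \<bar>Re (g u)\<bar> \<le> M" and u: "norm u < r/2"
  shows "\<bar>Im (g u)\<bar> \<le> M"
proof (rule dense_ge)
  fix M' assume "M < M'"
  have "M \<ge> 0"
    using bound[of 0] u norm_ge_zero[of u] g0 by simp
  define k where "k = pi / (2 * M')"
  have "k > 0"
    using \<open>M < M'\<close> \<open>M \<ge> 0\<close> by (simp add: k_def)
  have "\<bar>Im (of_real k * g u)\<bar> < 3/2"
  proof (rule abs_Im_less_of_abs_Re_less_pi_half[OF _ _ _ u])
    show "(\<lambda>v. of_real k * g v) holomorphic_on ball 0 r"
      using holg by (intro holomorphic_intros)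
    show "\<bar>Re (of_real k * g v)\<bar> < pi/2" if "v \<in> ball 0 r" for v
      using bound[OF that] \<open>M < M'\<close> \<open>k > 0\<close> \<open>M \<ge> 0\<close> by (simp add: k_def abs_mult field_simps)
  qed (simp add: g0)
  then have "\<bar>Im (g u)\<bar> < 3 / (2 * k)"
    using \<open>k > 0\<close> by (simp add: abs_mult field_simps)
  also have "\<dots> = 3 * M' / pi"
    using \<open>k > 0\<close> by (simp add: k_def)
  also have "\<dots> \<le> M'"
    using \<open>k > 0\<close> pi_gt3 \<open>M < M'\<close> \<open>M \<ge> 0\<close> by (simp add: divide_le_eq)
  finally show "\<bar>Im (g u)\<bar> \<le> M'"
    by simp
qed

section \<open>Symmetric sums over the integers\<close>

lemma sum_sym_int_Suc:
  fixes f :: "int \<Rightarrow> 'a::comm_monoid_add"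
  shows "(\<Sum>n = - int (Suc N)..int (Suc N). f n)
    = (\<Sum>n = - int N..int N. f n) + (f (int (Suc N)) + f (- int (Suc N)))"
proof -
  have "{- int (Suc N)..int (Suc N)} = insert (int (Suc N)) (insert (- int (Suc N)) {- int N..int N})"
    by auto
  then show ?thesis
    by (simp add: algebra_simps)
qed

lemma sum_sym_int_split:
  fixes f :: "int \<Rightarrow> 'a::comm_monoid_add"
  shows "(\<Sum>n = - int (N + m)..int (N + m). f n)
    = (\<Sum>n = - int N..int N. f n) + (\<Sum>k<m. f (int (N + 1 + k)) + f (- int (N + 1 + k)))"
proof (induction m)
  case (Suc m)
  then show ?case
    using sum_sym_int_Suc[of f "N + m"] by (simp add: algebra_simps)
qed simp

lemma sum_sym_int_shift:
  fixes f :: "int \<Rightarrow> 'a::comm_monoid_add"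
  shows "(\<Sum>n = - int N..int N. f (n - 1)) + f (int N) = (\<Sum>n = - int N..int N. f n) + f (- int N - 1)"
proof -
  have "(\<Sum>n = - int N..int N. f (n - 1)) = (\<Sum>n = - int N - 1..int N - 1. f n)"
    by (rule sum.reindex_bij_witness[of _ "\<lambda>m. m + 1" "\<lambda>n. n - 1"]) auto
  also have "\<dots> + f (int N) = (\<Sum>n \<in> insert (int N) {- int N - 1..int N - 1}. f n)"
    by (simp add: add.commute)
  also have "insert (int N) {- int N - 1..int N - 1} = insert (- int N - 1) {- int N..int N}"
    by auto
  also have "(\<Sum>n \<in> insert (- int N - 1) {- int N..int N}. f n) = (\<Sum>n = - int N..int N. f n) + f (- int N - 1)"
    by (simp add: add.commute)
  finally show ?thesis .
qed

lemma LIMSEQ_of_tail_sums: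
  fixes f :: "nat \<Rightarrow> 'a::real_normed_vector"
  assumes "\<And>m. f (N + m) = f N + (\<Sum>k<m. t k)" and "summable t"
  shows "f \<longlonglongrightarrow> f N + suminf t"
proof -
  have "(\<lambda>m. f N + (\<Sum>k<m. t k)) \<longlonglongrightarrow> f N + suminf t"
    by (intro tendsto_add tendsto_const summable_LIMSEQ assms(2))
  then have "(\<lambda>m. f (m + N)) \<longlonglongrightarrow> f N + suminf t"
    using assms(1) by (simp add: add.commute)
  then show ?thesis
    by (rule LIMSEQ_offset)
qed

lemma inverse_squares_sums_real: "(\<lambda>k. 1 / (real k + 1)\<^sup>2) sums (pi\<^sup>2 / 6)"
  using inverse_squares_sums by (simp only: of_nat_power of_nat_add of_nat_1)

lemma inverse_square_bound:
  fixes f :: "nat \<Rightarrow> 'a::banach"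
  assumes "\<And>k. norm (f k) \<le> D / (real k + 1)\<^sup>2"
  shows "summable f" and "norm (suminf f) \<le> D * pi\<^sup>2 / 6"
proof -
  have sums: "(\<lambda>k. D / (real k + 1)\<^sup>2) sums (D * pi\<^sup>2 / 6)"
    using sums_mult[OF inverse_squares_sums_real, of D] by (simp only: times_divide_eq_right mult_1_right)
  then have D: "summable (\<lambda>k. D / (real k + 1)\<^sup>2)"
    by (rule sums_summable)
  have "summable (\<lambda>k. norm (f k))"
    using assms by (intro summable_comparison_test[OF _ D]) auto
  then show "summable f"
    by (rule summable_norm_cancel)
  show "norm (suminf f) \<le> D * pi\<^sup>2 / 6"
    using norm_suminf_le[OF assms D] sums_unique[OF sums] by simp
qed

lemma inverse_square_sum_tendsto_0:
  fixes D :: real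
  assumes "D \<ge> 0"
  shows "((\<lambda>y. \<Sum>k. D / ((real k + 1)\<^sup>2 + y\<^sup>2)) \<longlongrightarrow> 0) at_top"
proof (rule swap_uniform_limit'[where f = "\<lambda>n y. \<Sum>k<n. D / ((real k + 1)\<^sup>2 + y\<^sup>2)" and g = "\<lambda>n. 0"
      and F = sequentially and S = UNIV])
  have "((\<lambda>y. D / ((real k + 1)\<^sup>2 + y\<^sup>2)) \<longlongrightarrow> 0) at_top" for k
  proof (rule tendsto_divide_0[OF tendsto_const])
    have "filterlim (\<lambda>y::real. (real k + 1)\<^sup>2 + y\<^sup>2) at_top at_top"
      by (intro filterlim_tendsto_add_at_top[OF tendsto_const] filterlim_pow_at_top filterlim_ident) simp
    then show "filterlim (\<lambda>y::real. (real k + 1)\<^sup>2 + y\<^sup>2) at_infinity at_top"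
      by (rule filterlim_at_top_imp_at_infinity)
  qed
  then show "\<forall>\<^sub>F n in sequentially. ((\<lambda>y. \<Sum>k<n. D / ((real k + 1)\<^sup>2 + y\<^sup>2)) \<longlongrightarrow> 0) at_top"
    using tendsto_sum[of "{..<_}" "\<lambda>k y. D / ((real k + 1)\<^sup>2 + y\<^sup>2)" "\<lambda>_. 0"] by simp
  have "\<bar>D / ((real k + 1)\<^sup>2 + y\<^sup>2)\<bar> \<le> D / (real k + 1)\<^sup>2" for k and y :: real
    using assms by (auto intro!: frac_le simp: add_pos_nonneg)
  then show "uniform_limit UNIV (\<lambda>n y. \<Sum>k<n. D / ((real k + 1)\<^sup>2 + y\<^sup>2))
      (\<lambda>y. \<Sum>k. D / ((real k + 1)\<^sup>2 + y\<^sup>2)) sequentially"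
    by (intro Weierstrass_m_test[OF _ inverse_square_bound(1)[of "\<lambda>k. D / (real k + 1)\<^sup>2"]]) auto
qed auto

definition sym_pair :: "(complex \<Rightarrow> complex) \<Rightarrow> nat \<Rightarrow> complex \<Rightarrow> complex" where
  "sym_pair \<phi> n w = \<phi> (w - of_nat n) + \<phi> (w + of_nat n)"

lemma abs_frac_add_frac_le:
  fixes a b y :: real
  assumes p: "a\<^sup>2 + y\<^sup>2 > 0" and q: "b\<^sup>2 + y\<^sup>2 > 0"
  shows "\<bar>a / (a\<^sup>2 + y\<^sup>2) + b / (b\<^sup>2 + y\<^sup>2)\<bar> \<le> \<bar>a + b\<bar> / (sqrt (a\<^sup>2 + y\<^sup>2) * sqrt (b\<^sup>2 + y\<^sup>2))"
proof -
  define P where "P = sqrt (a\<^sup>2 + y\<^sup>2)"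
  define Q where "Q = sqrt (b\<^sup>2 + y\<^sup>2)"
  have P: "P > 0" "P\<^sup>2 = a\<^sup>2 + y\<^sup>2" and Q: "Q > 0" "Q\<^sup>2 = b\<^sup>2 + y\<^sup>2"
    using p q by (auto simp: P_def Q_def)
  have "(P * Q)\<^sup>2 - (a * b + y\<^sup>2)\<^sup>2 = y\<^sup>2 * (a - b)\<^sup>2"
    unfolding power_mult_distrib P(2) Q(2) by (simp add: power2_eq_square algebra_simps)
  then have "(a * b + y\<^sup>2)\<^sup>2 \<le> (P * Q)\<^sup>2"
    by (metis diff_ge_0_iff_ge zero_le_mult_iff zero_le_power2)
  then have ab: "\<bar>a * b + y\<^sup>2\<bar> \<le> P * Q"
    using P Q by (metis abs_le_square_iff abs_of_pos mult_pos_pos)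
  have "a / (a\<^sup>2 + y\<^sup>2) + b / (b\<^sup>2 + y\<^sup>2)
      = (a * (b\<^sup>2 + y\<^sup>2) + b * (a\<^sup>2 + y\<^sup>2)) / ((a\<^sup>2 + y\<^sup>2) * (b\<^sup>2 + y\<^sup>2))"
    using p q by (intro add_frac_eq) auto
  also have "a * (b\<^sup>2 + y\<^sup>2) + b * (a\<^sup>2 + y\<^sup>2) = (a + b) * (a * b + y\<^sup>2)"
    by (simp add: algebra_simps power2_eq_square)
  finally have "a / (a\<^sup>2 + y\<^sup>2) + b / (b\<^sup>2 + y\<^sup>2) = (a + b) * (a * b + y\<^sup>2) / (P\<^sup>2 * Q\<^sup>2)"
    unfolding P(2) Q(2) .
  then have "\<bar>a / (a\<^sup>2 + y\<^sup>2) + b / (b\<^sup>2 + y\<^sup>2)\<bar> = \<bar>a + b\<bar> * \<bar>a * b + y\<^sup>2\<bar> / (P\<^sup>2 * Q\<^sup>2)"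
    by (simp add: abs_mult)
  also have "\<dots> \<le> \<bar>a + b\<bar> * (P * Q) / (P\<^sup>2 * Q\<^sup>2)"
    using ab P Q by (intro divide_right_mono mult_left_mono) auto
  also have "\<dots> = \<bar>a + b\<bar> / (P * Q)"
    using P(1) Q(1) by (simp add: power2_eq_square field_simps)
  finally show ?thesis
    by (simp add: P_def Q_def)
qed

lemma norm_add_of_real_sq_ge:
  assumes "\<bar>Re w\<bar> \<le> W" "W \<le> \<bar>x\<bar>"
  shows "(\<bar>x\<bar> - W)\<^sup>2 + (Im w)\<^sup>2 \<le> (norm (w + of_real x))\<^sup>2"
proof -
  have "\<bar>x\<bar> - W \<le> \<bar>Re w + x\<bar>"
    using assms by linarith
  then have "\<bar>\<bar>x\<bar> - W\<bar> \<le> \<bar>Re w + x\<bar>"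
    using assms(2) by simp
  then have "(\<bar>x\<bar> - W)\<^sup>2 \<le> (Re w + x)\<^sup>2"
    by (simp only: abs_le_square_iff)
  then show ?thesis
    by (simp add: cmod_power2)
qed

lemma abs_Re_sym_inverse_le:
  assumes W: "\<bar>Re w\<bar> \<le> W" and n: "real n > W"
  shows "\<bar>Re (1 / (w - of_nat n) + 1 / (w + of_nat n))\<bar> \<le> 2 * W / ((real n - W)\<^sup>2 + (Im w)\<^sup>2)"
proof -
  define z1 where "z1 = w - of_nat n"
  define z2 where "z2 = w + of_nat n"
  define q where "q = (real n - W)\<^sup>2 + (Im w)\<^sup>2"
  have z: "Im z1 = Im w" "Im z2 = Im w" "Re z1 + Re z2 = 2 * Re w"
    by (simp_all add: z1_def z2_def)
  have "q > 0"
    using n by (simp add: q_def add_pos_nonneg)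
  have q1: "q \<le> (norm z1)\<^sup>2"
    using norm_add_of_real_sq_ge[OF W, of "- real n"] n by (simp add: q_def z1_def)
  have q2: "q \<le> (norm z2)\<^sup>2"
    using norm_add_of_real_sq_ge[OF W, of "real n"] n by (simp add: q_def z2_def)
  have "q * q \<le> (norm z1)\<^sup>2 * (norm z2)\<^sup>2"
    using q1 q2 \<open>q > 0\<close> by (intro mult_mono) auto
  then have "q\<^sup>2 \<le> (norm z1 * norm z2)\<^sup>2"
    by (simp only: power_mult_distrib power2_eq_square[of q])
  then have q_le: "q \<le> norm z1 * norm z2"
    by (rule power2_le_imp_le) simp
  have "\<bar>Re (1 / z1 + 1 / z2)\<bar> \<le> \<bar>Re z1 + Re z2\<bar> / (norm z1 * norm z2)"
    using abs_frac_add_frac_le[of "Re z1" "Im w" "Re z2"] \<open>q > 0\<close> q1 q2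
    by (simp add: Re_divide cmod_def power2_eq_square z)
  also have "\<dots> \<le> 2 * W / q"
    using W q_le \<open>q > 0\<close> by (intro frac_le) (auto simp: z)
  finally show ?thesis
    by (simp only: z1_def z2_def q_def)
qed

lemma norm_sym_inverse_le:
  assumes W: "\<bar>Re w\<bar> \<le> W" and n: "real n > W"
  shows "norm (1 / (w - of_nat n) + 1 / (w + of_nat n)) \<le> 2 * norm w / (real n - W)\<^sup>2"
proof -
  define z1 where "z1 = w - of_nat n"
  define z2 where "z2 = w + of_nat n"
  have ge: "real n - W \<le> norm z1" "real n - W \<le> norm z2"
    using W abs_Re_le_cmod[of z1] abs_Re_le_cmod[of z2] by (auto simp: z1_def z2_def)
  then have "z1 \<noteq> 0" "z2 \<noteq> 0"
    using n by auto
  then have "1 / z1 + 1 / z2 = (z1 + z2) / (z1 * z2)"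
    by (simp add: field_simps)
  then have "norm (1 / z1 + 1 / z2) = 2 * norm w / (norm z1 * norm z2)"
    by (simp add: z1_def z2_def norm_divide norm_mult)
  also have "\<dots> \<le> 2 * norm w / (real n - W)\<^sup>2"
  proof (rule divide_left_mono)
    show "(real n - W)\<^sup>2 \<le> norm z1 * norm z2"
      using mult_mono[OF ge] n by (simp add: power2_eq_square)
  qed (use n \<open>z1 \<noteq> 0\<close> \<open>z2 \<noteq> 0\<close> in auto)
  finally show ?thesis
    by (simp only: z1_def z2_def)
qed

lemma norm_remainder_shift_le:
  fixes \<phi> :: "complex \<Rightarrow> complex"
  assumes decay: "\<And>z. norm z > R \<Longrightarrow> norm (\<phi> z - c / z) \<le> A / (norm z)\<^sup>2"
    and "A \<ge> 0" "R \<ge> 0" and W: "\<bar>Re w\<bar> \<le> W" and x: "\<bar>x\<bar> - W > R"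
  shows "norm (\<phi> (w + of_real x) - c / (w + of_real x)) \<le> A / ((\<bar>x\<bar> - W)\<^sup>2 + (Im w)\<^sup>2)"
proof -
  define q where "q = (\<bar>x\<bar> - W)\<^sup>2 + (Im w)\<^sup>2"
  have "q > 0"
    using x \<open>R \<ge> 0\<close> by (simp add: q_def add_pos_nonneg)
  have q_le: "q \<le> (norm (w + of_real x))\<^sup>2"
    using norm_add_of_real_sq_ge[OF W, of x] x \<open>R \<ge> 0\<close> by (simp add: q_def)
  have "(\<bar>x\<bar> - W)\<^sup>2 \<le> (norm (w + of_real x))\<^sup>2"
    using q_le zero_le_power2[of "Im w"] unfolding q_def by linarith
  then have "\<bar>x\<bar> - W \<le> norm (w + of_real x)"
    by (rule power2_le_imp_le) simp
  then have "norm (\<phi> (w + of_real x) - c / (w + of_real x)) \<le> A / (norm (w + of_real x))\<^sup>2"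
    using x by (intro decay) simp
  also have "\<dots> \<le> A / q"
    using q_le \<open>q > 0\<close> \<open>A \<ge> 0\<close> by (intro frac_le) auto
  finally show ?thesis
    by (simp add: q_def)
qed

lemma sym_pair_bounds:
  fixes \<phi> :: "complex \<Rightarrow> complex"
  assumes decay: "\<And>z. norm z > R \<Longrightarrow> norm (\<phi> z - c / z) \<le> A / (norm z)\<^sup>2"
    and "Im c = 0" "A \<ge> 0" "R \<ge> 0"
    and W: "\<bar>Re w\<bar> \<le> W" and n: "real n - W > R"
  shows "\<bar>Re (sym_pair \<phi> n w)\<bar> \<le> (2 * W * norm c + 2 * A) / ((real n - W)\<^sup>2 + (Im w)\<^sup>2)"
    and "norm (sym_pair \<phi> n w) \<le> (2 * norm c * norm w + 2 * A) / (real n - W)\<^sup>2"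
proof -
  define q where "q = (real n - W)\<^sup>2 + (Im w)\<^sup>2"
  define X where "X = 1 / (w - of_nat n) + 1 / (w + of_nat n)"
  define D1 where "D1 = \<phi> (w - of_nat n) - c / (w - of_nat n)"
  define D2 where "D2 = \<phi> (w + of_nat n) - c / (w + of_nat n)"
  have "real n > W"
    using n \<open>R \<ge> 0\<close> by simp
  have D: "norm D1 \<le> A / q" "norm D2 \<le> A / q"
    using norm_remainder_shift_le[OF decay \<open>A \<ge> 0\<close> \<open>R \<ge> 0\<close> W, of "- real n"]
      norm_remainder_shift_le[OF decay \<open>A \<ge> 0\<close> \<open>R \<ge> 0\<close> W, of "real n"] n
    by (simp_all add: D1_def D2_def q_def)
  have split: "sym_pair \<phi> n w = c * X + D1 + D2"
    by (simp add: sym_pair_def X_def D1_def D2_def distrib_left)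
  have "\<bar>Re (c * X)\<bar> = \<bar>Re c\<bar> * \<bar>Re X\<bar>"
    using \<open>Im c = 0\<close> by (simp add: abs_mult)
  also have "\<dots> \<le> norm c * (2 * W / q)"
    using abs_Re_sym_inverse_le[OF W \<open>real n > W\<close>] abs_Re_le_cmod[of c]
    by (intro mult_mono) (simp_all add: X_def q_def)
  finally have "\<bar>Re (sym_pair \<phi> n w)\<bar> \<le> norm c * (2 * W / q) + A / q + A / q"
    unfolding split using D abs_Re_le_cmod[of D1] abs_Re_le_cmod[of D2] by simp
  then show "\<bar>Re (sym_pair \<phi> n w)\<bar> \<le> (2 * W * norm c + 2 * A) / ((real n - W)\<^sup>2 + (Im w)\<^sup>2)"
    by (simp add: q_def add_divide_distrib algebra_simps)
  have "norm (c * X) \<le> norm c * (2 * norm w / (real n - W)\<^sup>2)"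
    unfolding norm_mult X_def using norm_sym_inverse_le[OF W \<open>real n > W\<close>] by (rule mult_left_mono) simp
  moreover have "A / q \<le> A / (real n - W)\<^sup>2"
    using \<open>real n > W\<close> \<open>A \<ge> 0\<close> by (intro frac_le) (auto simp: q_def)
  ultimately have "norm (sym_pair \<phi> n w) \<le> norm c * (2 * norm w / (real n - W)\<^sup>2)
      + A / (real n - W)\<^sup>2 + A / (real n - W)\<^sup>2"
    unfolding split using D norm_triangle_ineq[of "c * X + D1" D2] norm_triangle_ineq[of "c * X" D1]
    by linarith
  then show "norm (sym_pair \<phi> n w) \<le> (2 * norm c * norm w + 2 * A) / (real n - W)\<^sup>2"
    by (simp add: add_divide_distrib algebra_simps)
qed

section \<open>Functions holomorphic off a segment\<close>

locale slit_function =
  fixes \<phi> :: "complex \<Rightarrow> complex" and a b :: real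
  assumes holomorphic: "\<phi> holomorphic_on - (complex_of_real ` {a..b})"
    and tendsto_zero: "(\<phi> \<longlongrightarrow> 0) at_infinity"
    and real: "\<And>z. z \<notin> complex_of_real ` {a..b} \<Longrightarrow> \<phi> (cnj z) = cnj (\<phi> z)"
begin

abbreviation slit :: "complex set" where
  "slit \<equiv> complex_of_real ` {a..b}"

definition radius :: real where
  "radius = \<bar>a\<bar> + \<bar>b\<bar> + 1"

lemma radius_pos: "radius > 0"
  by (simp add: radius_def add_nonneg_pos)

lemma notin_slit_if_norm: "norm w \<ge> radius \<Longrightarrow> w \<notin> slit"
  by (auto simp: radius_def)

lemma notin_slit_if_Im: "Im w \<noteq> 0 \<Longrightarrow> w \<notin> slit"
  by auto

lemma isCont_phi: "w \<notin> slit \<Longrightarrow> isCont \<phi> w"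
proof -
  have "compact slit"
    by (intro compact_continuous_image continuous_intros) auto
  then have "open (- slit)"
    by (simp add: compact_imp_closed open_Compl)
  then show "w \<notin> slit \<Longrightarrow> isCont \<phi> w"
    using holomorphic_on_imp_continuous_on[OF holomorphic] continuous_on_eq_continuous_at by blast
qed

lemma Im_phi_real: "Im (\<phi> (of_real t)) = 0" if "of_real t \<notin> slit"
  using real[OF that] by (metis Reals_cnj_iff Reals_of_real complex_is_Real_iff)

definition phi_inv :: "complex \<Rightarrow> complex" where
  "phi_inv u = (if u = 0 then 0 else \<phi> (inverse u))"

lemma phi_inv_0 [simp]: "phi_inv 0 = 0"
  by (simp add: phi_inv_def)

lemma inverse_notin_slit:
  assumes "u \<noteq> 0" "norm u < 1 / radius"
  shows "inverse u \<notin> slit"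
proof (rule notin_slit_if_norm)
  have "radius < 1 / norm u"
    using assms radius_pos by (simp add: field_simps)
  then show "radius \<le> norm (inverse u)"
    by (simp add: norm_inverse divide_inverse)
qed

lemma phi_inv_holomorphic: "phi_inv holomorphic_on ball 0 (1 / radius)"
proof (rule no_isolated_singularity)
  have "inverse ` (ball 0 (1 / radius) - {0}) \<subseteq> - slit"
    using inverse_notin_slit by (intro image_subsetI ComplI) simp
  then have "(\<lambda>u. \<phi> (inverse u)) holomorphic_on ball 0 (1 / radius) - {0}"
    by (intro holomorphic_on_compose_gen[OF _ holomorphic, unfolded o_def] holomorphic_intros) auto
  then show "phi_inv holomorphic_on ball 0 (1 / radius) - {0}"
    by (rule holomorphic_cong[THEN iffD1, rotated 2]) (auto simp: phi_inv_def)
  have "((\<lambda>u. \<phi> (inverse u)) \<longlongrightarrow> 0) (at 0)"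
    by (rule filterlim_compose[OF tendsto_zero filterlim_inverse_at_infinity])
  then have cont0: "isCont phi_inv 0"
    unfolding continuous_at phi_inv_0 by (rule Lim_transform_eventually) (auto simp: phi_inv_def eventually_at_filter)
  have "isCont phi_inv u" if "u \<in> ball 0 (1 / radius)" for u
  proof (cases "u = 0")
    case False
    then show ?thesis
      using holomorphic_on_imp_continuous_on[OF \<open>phi_inv holomorphic_on _\<close>] that
      by (simp add: continuous_on_eq_continuous_at open_Diff)
  qed (use cont0 in simp)
  then show "continuous_on (ball 0 (1 / radius)) phi_inv"
    by (simp add: continuous_at_imp_continuous_on)
qed auto

text \<open>The coefficient of \<open>1/w\<close> in the expansion of \<open>\<phi>\<close> at infinity.\<close>
definition coeff_inf :: complex where
  "coeff_inf = deriv phi_inv 0"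

lemma Im_coeff_inf: "Im coeff_inf = 0"
proof -
  obtain h where holh: "h holomorphic_on ball 0 (1 / radius)"
    and h: "\<And>u. norm u < 1 / radius \<Longrightarrow> phi_inv u = u * h u" and h0: "coeff_inf = h 0"
    using Schwarz3[OF phi_inv_holomorphic phi_inv_0] unfolding coeff_inf_def by metis
  have "isCont h 0"
    using holh radius_pos
    by (intro field_differentiable_imp_continuous_at holomorphic_on_imp_differentiable_at) auto
  then have lim: "((\<lambda>t. Im (h (of_real t))) \<longlongrightarrow> Im (h 0)) (at_right 0)"
    by (intro tendsto_Im isCont_tendsto_compose[OF \<open>isCont h 0\<close>]) (auto intro!: tendsto_eq_intros)
  have "\<forall>\<^sub>F t in at_right 0. Im (h (of_real t)) = 0"
    unfolding eventually_at_right_field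
  proof (intro exI[of _ "1 / radius"] conjI allI impI)
    fix t :: real assume t: "0 < t" "t < 1 / radius"
    then have "of_real t * h (of_real t) = \<phi> (of_real (inverse t))"
      using h[of "of_real t"] by (simp add: phi_inv_def)
    moreover have "Im (\<phi> (of_real (inverse t))) = 0"
      using t inverse_notin_slit[of "of_real t"] by (intro Im_phi_real) simp
    ultimately have "Im (of_real t * h (of_real t)) = 0"
      by simp
    then show "Im (h (of_real t)) = 0"
      using t by simp
  qed (use radius_pos in simp)
  then have "((\<lambda>t. Im (h (of_real t))) \<longlongrightarrow> 0) (at_right 0)"
    by (rule tendsto_eventually)
  with lim have "Im (h 0) = 0"
    using tendsto_unique[OF trivial_limit_at_right_real] by blast
  then show ?thesis
    by (simp add: h0)
qed

lemma norm_phi_inv_le: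
  assumes bound: "\<And>w. w \<notin> slit \<Longrightarrow> \<bar>Re (\<phi> w)\<bar> \<le> M" and u: "norm u < 1 / (2 * radius)"
  shows "norm (phi_inv u) \<le> 2 * M"
proof -
  have "M \<ge> 0"
    using bound[of "of_real radius"] notin_slit_if_norm radius_pos by force
  have "\<bar>Re (phi_inv v)\<bar> \<le> M" if "v \<in> ball 0 (1 / radius)" for v
    using \<open>M \<ge> 0\<close> bound inverse_notin_slit[of v] that by (auto simp: phi_inv_def)
  moreover have "norm u < 1 / radius / 2" "norm u < 1 / radius"
    using u radius_pos by (simp_all add: field_simps)
  ultimately have "\<bar>Re (phi_inv u)\<bar> \<le> M" "\<bar>Im (phi_inv u)\<bar> \<le> M"
    using abs_Im_le_of_abs_Re_le[OF phi_inv_holomorphic phi_inv_0] by auto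
  then show ?thesis
    using cmod_le[of "phi_inv u"] by linarith
qed

lemma coeff_inf_bounds:
  assumes bound: "\<And>w. w \<notin> slit \<Longrightarrow> \<bar>Re (\<phi> w)\<bar> \<le> M"
  shows "norm coeff_inf \<le> 4 * M * radius"
    and "norm w > 2 * radius \<Longrightarrow> norm (\<phi> w - coeff_inf / w) \<le> 16 * M * radius\<^sup>2 / (norm w)\<^sup>2"
proof -
  define r where "r = 1 / (2 * radius)"
  have "r > 0"
    using radius_pos by (simp add: r_def)
  have hol: "phi_inv holomorphic_on ball 0 r"
  proof (rule holomorphic_on_subset[OF phi_inv_holomorphic subset_ball])
    show "r \<le> 1 / radius"
      using radius_pos by (simp add: r_def field_simps)
  qed
  have bound_inv: "norm (phi_inv u) \<le> 2 * M" if "u \<in> ball 0 r" for u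
    using norm_phi_inv_le[OF bound] that by (simp add: r_def)
  show "norm coeff_inf \<le> 4 * M * radius"
    using Schwarz_Lemma_ball(2)[OF hol phi_inv_0 bound_inv, of 0] \<open>r > 0\<close>
    by (simp add: coeff_inf_def r_def)
  assume w: "norm w > 2 * radius"
  then have "w \<noteq> 0" "norm (inverse w) < r"
    using radius_pos by (auto simp: r_def norm_divide divide_simps)
  moreover have "phi_inv (inverse w) = \<phi> w"
    using \<open>w \<noteq> 0\<close> by (simp add: phi_inv_def)
  ultimately have "norm (\<phi> w - coeff_inf / w) \<le> 2 * (2 * M) * (norm (inverse w))\<^sup>2 / r\<^sup>2"
    using Schwarz_Lemma_ball_second_order[OF hol phi_inv_0 bound_inv, of "inverse w"]
    by (simp add: coeff_inf_def divide_inverse)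
  also have "\<dots> = 16 * M * radius\<^sup>2 / (norm w)\<^sup>2"
    by (simp add: r_def norm_divide power_divide field_simps)
  finally show "norm (\<phi> w - coeff_inf / w) \<le> 16 * M * radius\<^sup>2 / (norm w)\<^sup>2" .
qed

end

section \<open>Periodisation\<close>

definition hsumZ_part :: "(hpt \<Rightarrow> real) \<Rightarrow> hpt \<Rightarrow> nat \<Rightarrow> real" where
  "hsumZ_part F p N = (\<Sum>n = - int N..int N. F (hpt_translate (- n) p))"

definition hsumZ :: "(hpt \<Rightarrow> real) \<Rightarrow> hpt \<Rightarrow> real" where
  "hsumZ F p = lim (hsumZ_part F p)"

lemma hcont_at_hsumZ_part:
  assumes "\<And>k. hcont_at F (hpt_translate k p)"
  shows "hcont_at (\<lambda>q. hsumZ_part F q N) p"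
  unfolding hsumZ_part_def using assms by (intro hcont_at_sum hcont_at_translate) auto

lemma hsumZ_part_translate_LIMSEQ:
  assumes "hsumZ_part F p \<longlonglongrightarrow> L"
    and "(\<lambda>N. F (hpt_translate (int N + 1) p)) \<longlonglongrightarrow> 0" "(\<lambda>N. F (hpt_translate (- int N) p)) \<longlonglongrightarrow> 0"
  shows "hsumZ_part F (hpt_translate 1 p) \<longlonglongrightarrow> L"
proof -
  define f where "f m = F (hpt_translate (- m) p)" for m
  have "hsumZ_part F (hpt_translate 1 p)
      = (\<lambda>N. hsumZ_part F p N + F (hpt_translate (int N + 1) p) - F (hpt_translate (- int N) p))"
    using sum_sym_int_shift[of f] by (intro ext) (simp add: hsumZ_part_def f_def algebra_simps)
  moreover have "(\<lambda>N. hsumZ_part F p N + F (hpt_translate (int N + 1) p) - F (hpt_translate (- int N) p)) \<longlonglongrightarrow> L + 0 - 0"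
    using assms by (intro tendsto_intros)
  ultimately show ?thesis
    by simp
qed

locale hat_function = slit_function +
  fixes F :: "hpt \<Rightarrow> real"
  assumes F_Up: "\<And>z. Im z > 0 \<Longrightarrow> F (Up z) = Re (\<phi> z)"
    and hcont_F: "\<And>p. hvalid p \<Longrightarrow> hcont_at F p"
begin

lemma F_eq_Re_phi:
  assumes "hvalid q" "hpt_pos q \<notin> slit"
  shows "F q = Re (\<phi> (hpt_pos q))"
  using hcont_at_boundary_value[OF assms(1) hcont_F[OF assms(1)] isCont_phi[OF assms(2)] F_Up] .

lemma Re_phi_locally_bounded:
  "\<exists>d>0. \<exists>B. \<forall>z\<in>ball z0 d. Im z > 0 \<longrightarrow> \<bar>Re (\<phi> z)\<bar> \<le> B"
proof -
  consider "Im z0 > 0" | "Im z0 = 0" | "Im z0 < 0"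
    by linarith
  then show ?thesis
  proof cases
    case 1
    then have "isCont (\<lambda>z. Re (\<phi> z)) z0"
      using isCont_phi notin_slit_if_Im by (intro isCont_Re) simp
    then obtain d where "d > 0" "\<And>z. dist z z0 < d \<Longrightarrow> dist (Re (\<phi> z)) (Re (\<phi> z0)) < 1"
      unfolding continuous_at_eps_delta using zero_less_one by blast
    then have "\<forall>z\<in>ball z0 d. Im z > 0 \<longrightarrow> \<bar>Re (\<phi> z)\<bar> \<le> \<bar>Re (\<phi> z0)\<bar> + 1"
      by (force simp: dist_commute dist_real_def)
    with \<open>d > 0\<close> show ?thesis
      by blast
  next
    case 2
    then have "z0 = of_real (Re z0)"
      by (simp add: complex_eq_iff)
    moreover obtain d B where "d > 0" "\<forall>z. Im z > 0 \<and> cmod (z - of_real (Re z0)) < d \<longrightarrow> \<bar>F (Up z)\<bar> \<le> B"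
      using hcont_bounded_near_real hcont_F by blast
    ultimately show ?thesis
      using F_Up by (intro exI[of _ d] conjI exI[of _ B]) (auto simp: dist_norm norm_minus_commute)
  next
    case 3
    have "Im z \<le> 0" if "z \<in> ball z0 (- Im z0)" for z
      using that abs_Im_le_cmod[of "z0 - z"] by (simp add: dist_norm)
    then show ?thesis
      using 3 by (intro exI[of _ "- Im z0"]) force
  qed
qed

lemma Re_phi_bounded: "\<exists>M. \<forall>z. Im z > 0 \<longrightarrow> \<bar>Re (\<phi> z)\<bar> \<le> M"
proof -
  obtain R where R: "\<And>z. R \<le> norm z \<Longrightarrow> norm (\<phi> z) < 1"
    using tendstoD[OF tendsto_zero zero_less_one] unfolding eventually_at_infinity by auto
  have "\<exists>d>(0::real). \<exists>B. \<forall>z\<in>cball 0 R. \<forall>v. (v = z \<and> Im z > 0) \<longrightarrow> \<bar>Re (\<phi> v)\<bar> \<le> B"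
  proof (rule compact_uniform_local_bound)
    show "\<exists>e>0. \<exists>B. \<forall>y\<in>ball z0 e. \<forall>v. (v = y \<and> Im y > 0) \<longrightarrow> \<bar>Re (\<phi> v)\<bar> \<le> B" for z0
      using Re_phi_locally_bounded[of z0] by blast
  qed auto
  then obtain B where "\<forall>z\<in>cball 0 R. \<forall>v. (v = z \<and> Im z > 0) \<longrightarrow> \<bar>Re (\<phi> v)\<bar> \<le> B"
    by blast
  then have B: "\<And>z. norm z \<le> R \<Longrightarrow> Im z > 0 \<Longrightarrow> \<bar>Re (\<phi> z)\<bar> \<le> B"
    by (simp add: mem_cball_0)
  have "\<bar>Re (\<phi> z)\<bar> \<le> max B 1" if "Im z > 0" for z
  proof (cases "norm z \<le> R")
    case False
    then show ?thesis
      using R[of z] abs_Re_le_cmod[of "\<phi> z"] by simp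
  qed (use B that in fastforce)
  then show ?thesis
    by blast
qed

lemma abs_Re_phi_le_off_slit:
  assumes bound: "\<And>z. Im z > 0 \<Longrightarrow> \<bar>Re (\<phi> z)\<bar> \<le> M" and w: "w \<notin> slit"
  shows "\<bar>Re (\<phi> w)\<bar> \<le> M"
proof -
  consider "Im w > 0" | "Im w < 0" | "Im w = 0"
    by linarith
  then show ?thesis
  proof cases
    case 2
    then have "\<phi> w = cnj (\<phi> (cnj w))"
      using real[of "cnj w"] notin_slit_if_Im[of "cnj w"] by simp
    then show ?thesis
      using bound[of "cnj w"] 2 by simp
  next
    case 3
    have "((\<lambda>t. Re (\<phi> (w + \<i> * of_real t))) \<longlongrightarrow> Re (\<phi> w)) (at_right 0)"
      by (intro tendsto_Re isCont_tendsto_compose[OF isCont_phi[OF w]]) (auto intro!: tendsto_eq_intros)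
    moreover have "\<forall>\<^sub>F t in at_right 0. \<bar>Re (\<phi> (w + \<i> * of_real t))\<bar> \<le> M"
      using 3 by (auto simp: eventually_at_right_field intro!: bound exI[of _ 1])
    ultimately show ?thesis
      using tendsto_le[OF trivial_limit_at_right_real tendsto_const tendsto_rabs] by blast
  qed (use bound in simp)
qed

lemma phi_expansion_bounds:
  assumes "\<And>z. Im z > 0 \<Longrightarrow> \<bar>Re (\<phi> z)\<bar> \<le> M"
  shows "norm coeff_inf \<le> 4 * M * radius"
    and "norm w > 2 * radius \<Longrightarrow> norm (\<phi> w - coeff_inf / w) \<le> 16 * M * radius\<^sup>2 / (norm w)\<^sup>2"
  using coeff_inf_bounds abs_Re_phi_le_off_slit[OF assms] by blast+

end

lemma hat_function_if_ChatR:
  assumes "\<phi> \<in> ChatR a b"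
  obtains F where "hat_function \<phi> a b F"
  using assms unfolding ChatR_def hat_function_def slit_function_def hat_function_axioms_def by blast

text \<open>The constant \<open>C\<close>: \<open>2 N + 1\<close> terms bounded one by one and the tail, with \<open>N = tail_start (1/2)\<close>.\<close>
definition sumZ_bound :: "real \<Rightarrow> real" where
  "sumZ_bound R = real (2 * nat \<lceil>1/2 + 2 * R\<rceil> + 1) + (4 * R + 32 * R\<^sup>2) * pi\<^sup>2 / 6"

context hat_function
begin

text \<open>For \<open>\<bar>Re w\<bar> \<le> W\<close> and \<open>n > tail_start W\<close>, both \<open>w - n\<close> and \<open>w + n\<close> lie where the
  expansion at infinity holds.\<close>
definition tail_start :: "real \<Rightarrow> nat" where
  "tail_start W = nat \<lceil>W + 2 * radius\<rceil>"

lemma tail_notin_slit: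
  assumes "\<bar>Re w\<bar> \<le> W" "n > tail_start W"
  shows "w - of_nat n \<notin> slit" and "w + of_nat n \<notin> slit"
proof -
  have "real n > W + radius"
    using assms(2) radius_pos unfolding tail_start_def by linarith
  then have "radius \<le> \<bar>Re (w - of_nat n)\<bar>" "radius \<le> \<bar>Re (w + of_nat n)\<bar>"
    using assms(1) by auto
  then show "w - of_nat n \<notin> slit" "w + of_nat n \<notin> slit"
    by (meson abs_Re_le_cmod notin_slit_if_norm order_trans)+
qed

lemma tail_bounds:
  assumes M: "\<And>z. Im z > 0 \<Longrightarrow> \<bar>Re (\<phi> z)\<bar> \<le> M" and W: "\<bar>Re w\<bar> \<le> W"
  shows "\<bar>Re (sym_pair \<phi> (tail_start W + 1 + k) w)\<bar>
      \<le> (8 * W * radius + 32 * radius\<^sup>2) * M / ((real k + 1)\<^sup>2 + (Im w)\<^sup>2)"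
    and "norm (sym_pair \<phi> (tail_start W + 1 + k) w)
      \<le> (8 * norm w * radius + 32 * radius\<^sup>2) * M / (real k + 1)\<^sup>2"
proof -
  define n where "n = tail_start W + 1 + k"
  have "M \<ge> 0"
    using M[of \<i>] by simp
  have "W \<ge> 0"
    using W by linarith
  then have D: "0 \<le> (8 * W * radius + 32 * radius\<^sup>2) * M"
    using \<open>M \<ge> 0\<close> radius_pos by simp
  have n: "real n - W > 2 * radius" "real k + 1 \<le> real n - W"
    using radius_pos unfolding n_def tail_start_def by linarith+
  then have sq: "(real k + 1)\<^sup>2 \<le> (real n - W)\<^sup>2"
    by (intro power_mono) auto
  note sym = sym_pair_bounds[OF phi_expansion_bounds(2)[OF M] Im_coeff_inf _ _ W n(1)]
  have c: "norm coeff_inf \<le> 4 * M * radius"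
    by (rule phi_expansion_bounds(1)[OF M])
  have "2 * W * norm coeff_inf + 2 * (16 * M * radius\<^sup>2) \<le> (8 * W * radius + 32 * radius\<^sup>2) * M"
    using mult_left_mono[OF c, of "2 * W"] W by (simp add: algebra_simps)
  moreover have "(real k + 1)\<^sup>2 + (Im w)\<^sup>2 > 0"
    by (simp add: add_pos_nonneg)
  ultimately have "(2 * W * norm coeff_inf + 2 * (16 * M * radius\<^sup>2)) / ((real n - W)\<^sup>2 + (Im w)\<^sup>2)
      \<le> (8 * W * radius + 32 * radius\<^sup>2) * M / ((real k + 1)\<^sup>2 + (Im w)\<^sup>2)"
    using sq D by (intro frac_le) auto
  then show "\<bar>Re (sym_pair \<phi> (tail_start W + 1 + k) w)\<bar>
      \<le> (8 * W * radius + 32 * radius\<^sup>2) * M / ((real k + 1)\<^sup>2 + (Im w)\<^sup>2)"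
    using sym(1) \<open>M \<ge> 0\<close> radius_pos unfolding n_def by fastforce
  have "2 * norm coeff_inf * norm w + 2 * (16 * M * radius\<^sup>2) \<le> (8 * norm w * radius + 32 * radius\<^sup>2) * M"
    using mult_left_mono[OF c, of "2 * norm w"] by (simp add: algebra_simps)
  then have "(2 * norm coeff_inf * norm w + 2 * (16 * M * radius\<^sup>2)) / (real n - W)\<^sup>2
      \<le> (8 * norm w * radius + 32 * radius\<^sup>2) * M / (real k + 1)\<^sup>2"
    using sq \<open>M \<ge> 0\<close> radius_pos by (intro frac_le) (auto simp: add_pos_nonneg)
  then show "norm (sym_pair \<phi> (tail_start W + 1 + k) w)
      \<le> (8 * norm w * radius + 32 * radius\<^sup>2) * M / (real k + 1)\<^sup>2"
    using sym(2) \<open>M \<ge> 0\<close> radius_pos unfolding n_def by fastforce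
qed

lemma summable_tail:
  assumes W: "\<bar>Re w\<bar> \<le> W"
  shows "summable (\<lambda>k. sym_pair \<phi> (tail_start W + 1 + k) w)"
    and "summable (\<lambda>k. Re (sym_pair \<phi> (tail_start W + 1 + k) w))"
proof -
  obtain M where M: "\<And>z. Im z > 0 \<Longrightarrow> \<bar>Re (\<phi> z)\<bar> \<le> M"
    using Re_phi_bounded by blast
  show "summable (\<lambda>k. sym_pair \<phi> (tail_start W + 1 + k) w)"
    using tail_bounds(2)[OF M W] by (rule inverse_square_bound(1))
  then show "summable (\<lambda>k. Re (sym_pair \<phi> (tail_start W + 1 + k) w))"
    by (rule summable_Re)
qed

definition tail_sum :: "real \<Rightarrow> complex \<Rightarrow> real" where
  "tail_sum W w = (\<Sum>k. Re (sym_pair \<phi> (tail_start W + 1 + k) w))"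

lemma hsumZ_part_LIMSEQ:
  assumes p: "hvalid p" and W: "\<bar>Re (hpt_pos p)\<bar> \<le> W"
  shows "hsumZ_part F p \<longlonglongrightarrow> hsumZ_part F p (tail_start W) + tail_sum W (hpt_pos p)"
  unfolding tail_sum_def
proof (rule LIMSEQ_of_tail_sums[OF _ summable_tail(2)[OF W]])
  fix m
  have pair: "F (hpt_translate (- int n) p) + F (hpt_translate (- (- int n)) p) = Re (sym_pair \<phi> n (hpt_pos p))"
    if "n > tail_start W" for n
    using F_eq_Re_phi[of "hpt_translate _ p"] tail_notin_slit[OF W that] p by (simp add: sym_pair_def)
  have pair_tail: "F (hpt_translate (- int (tail_start W + 1 + k)) p) + F (hpt_translate (- (- int (tail_start W + 1 + k))) p)
      = Re (sym_pair \<phi> (tail_start W + 1 + k) (hpt_pos p))" for k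
    by (rule pair) simp
  show "hsumZ_part F p (tail_start W + m)
      = hsumZ_part F p (tail_start W) + (\<Sum>k<m. Re (sym_pair \<phi> (tail_start W + 1 + k) (hpt_pos p)))"
    unfolding hsumZ_part_def sum_sym_int_split by (simp only: pair_tail)
qed

lemma hsumZ_eq_tail:
  assumes "hvalid p" "\<bar>Re (hpt_pos p)\<bar> \<le> W"
  shows "hsumZ F p = hsumZ_part F p (tail_start W) + tail_sum W (hpt_pos p)"
  unfolding hsumZ_def using hsumZ_part_LIMSEQ[OF assms] by (rule limI)

lemma hsumZ_part_LIMSEQ_hsumZ: "hvalid p \<Longrightarrow> hsumZ_part F p \<longlonglongrightarrow> hsumZ F p"
  using hsumZ_part_LIMSEQ hsumZ_eq_tail by fastforce

lemma convergent_sumZ_part: "convergent (sumZ_part \<phi> z)"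
proof -
  define N where "N = tail_start \<bar>Re z\<bar>"
  have "sumZ_part \<phi> z \<longlonglongrightarrow> sumZ_part \<phi> z N + (\<Sum>k. sym_pair \<phi> (N + 1 + k) z)"
  proof (rule LIMSEQ_of_tail_sums)
    show "summable (\<lambda>k. sym_pair \<phi> (N + 1 + k) z)"
      unfolding N_def by (rule summable_tail(1)) simp
    have pair: "\<phi> (z - of_int (int n)) + \<phi> (z - of_int (- int n)) = sym_pair \<phi> n z" for n
      by (simp add: sym_pair_def)
    show "sumZ_part \<phi> z (N + m) = sumZ_part \<phi> z N + (\<Sum>k<m. sym_pair \<phi> (N + 1 + k) z)" for m
      unfolding sumZ_part_def sum_sym_int_split by (simp only: pair)
  qed
  then show ?thesis
    by (rule convergentI)
qed

lemma hsumZ_Up: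
  assumes "Im z > 0"
  shows "hsumZ F (Up z) = Re (sumZ \<phi> z)"
proof -
  have "hsumZ_part F (Up z) = (\<lambda>N. Re (sumZ_part \<phi> z N))"
    using assms by (intro ext) (simp add: hsumZ_part_def sumZ_part_def F_Up)
  moreover have "(\<lambda>N. Re (sumZ_part \<phi> z N)) \<longlonglongrightarrow> Re (sumZ \<phi> z)"
    using convergent_sumZ_part unfolding sumZ_def convergent_LIMSEQ_iff by (rule tendsto_Re)
  ultimately show ?thesis
    using hsumZ_part_LIMSEQ_hsumZ[of "Up z"] assms LIMSEQ_unique by auto
qed

lemma F_translate_LIMSEQ_0:
  assumes p: "hvalid p" and k: "filterlim (\<lambda>N. norm (of_int (k N) :: complex)) at_top sequentially"
  shows "(\<lambda>N. F (hpt_translate (k N) p)) \<longlonglongrightarrow> 0"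
proof -
  define s where "s N = hpt_pos p + of_int (k N)" for N
  have "filterlim s at_infinity sequentially"
    using k unfolding filterlim_at_infinity_conv_norm_at_top[symmetric] s_def
    by (rule tendsto_add_filterlim_at_infinity[OF tendsto_const])
  then have "(\<lambda>N. \<phi> (s N)) \<longlonglongrightarrow> 0"
    by (rule filterlim_compose[OF tendsto_zero])
  then have "(\<lambda>N. Re (\<phi> (s N))) \<longlonglongrightarrow> 0"
    using tendsto_Re by fastforce
  moreover have "\<forall>\<^sub>F N in sequentially. radius \<le> norm (s N)"
    using filterlim_at_infinity_imp_norm_at_top[OF \<open>filterlim s at_infinity _\<close>]
    unfolding filterlim_at_top by blast
  then have "\<forall>\<^sub>F N in sequentially. Re (\<phi> (s N)) = F (hpt_translate (k N) p)"
  proof (rule eventually_mono)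
    fix N assume "radius \<le> norm (s N)"
    then show "Re (\<phi> (s N)) = F (hpt_translate (k N) p)"
      using F_eq_Re_phi[of "hpt_translate (k N) p"] p notin_slit_if_norm by (simp add: s_def)
  qed
  ultimately show ?thesis
    by (rule Lim_transform_eventually)
qed

lemma hsumZ_translate_1:
  assumes "hvalid p"
  shows "hsumZ F (hpt_translate 1 p) = hsumZ F p"
proof -
  have "norm (of_int (int N + 1) :: complex) = real (Suc N)" for N
    using norm_of_nat[of "Suc N", where 'a = complex] by (simp add: add.commute)
  then have "(\<lambda>N. F (hpt_translate (int N + 1) p)) \<longlonglongrightarrow> 0"
    using assms filterlim_sequentially_Suc[of real] filterlim_real_sequentially
    by (intro F_translate_LIMSEQ_0) simp_all
  moreover have "(\<lambda>N. F (hpt_translate (- int N) p)) \<longlonglongrightarrow> 0"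
    using assms filterlim_real_sequentially by (intro F_translate_LIMSEQ_0) simp_all
  ultimately have "hsumZ_part F (hpt_translate 1 p) \<longlonglongrightarrow> hsumZ F p"
    using hsumZ_part_translate_LIMSEQ hsumZ_part_LIMSEQ_hsumZ[OF assms] by blast
  then show ?thesis
    unfolding hsumZ_def[of F "hpt_translate 1 p"] by (rule limI)
qed

lemma hsumZ_hshift: "hvalid p \<Longrightarrow> hsumZ F (hshift p) = hsumZ F p"
  by (simp add: hshift_eq_translate hsumZ_translate_1)

lemma hsumZ_translate:
  assumes "hvalid p"
  shows "hsumZ F (hpt_translate k p) = hsumZ F p"
proof (induction k rule: int_induct[where k = 0])
  case (step1 i)
  then show ?case
    using hsumZ_translate_1[of "hpt_translate i p"] assms by (simp add: add.commute)
next
  case (step2 i)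
  then show ?case
    using hsumZ_translate_1[of "hpt_translate (i - 1) p"] assms by simp
qed simp

lemma isCont_tail_sum:
  assumes "\<bar>Re w\<bar> < W"
  shows "isCont (tail_sum W) w"
proof -
  define S where "S = {w. \<bar>Re w\<bar> < W}"
  obtain M where M: "\<And>z. Im z > 0 \<Longrightarrow> \<bar>Re (\<phi> z)\<bar> \<le> M"
    using Re_phi_bounded by blast
  have "\<bar>Re (sym_pair \<phi> (tail_start W + 1 + k) v)\<bar> \<le> (8 * W * radius + 32 * radius\<^sup>2) * M / (real k + 1)\<^sup>2"
    if "v \<in> S" for k v
  proof -
    have "W \<ge> 0" "M \<ge> 0"
      using that M[of \<i>] by (auto simp: S_def)
    then have "(8 * W * radius + 32 * radius\<^sup>2) * M / ((real k + 1)\<^sup>2 + (Im v)\<^sup>2)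
        \<le> (8 * W * radius + 32 * radius\<^sup>2) * M / (real k + 1)\<^sup>2"
      using radius_pos by (intro frac_le) (auto simp: add_pos_nonneg)
    then show ?thesis
      using tail_bounds(1)[OF M, of v W k] that by (simp add: S_def)
  qed
  then have "uniform_limit S (\<lambda>n v. \<Sum>k<n. Re (sym_pair \<phi> (tail_start W + 1 + k) v)) (tail_sum W) sequentially"
    unfolding tail_sum_def
    by (intro Weierstrass_m_test[OF _ inverse_square_bound(1)[of "\<lambda>k. (8 * W * radius + 32 * radius\<^sup>2) * M / (real k + 1)\<^sup>2"]])
      (auto simp: abs_mult)
  moreover have "continuous_on S (\<lambda>v. Re (sym_pair \<phi> (tail_start W + 1 + k) v))" for k
    unfolding sym_pair_def S_def using tail_notin_slit[of _ W "tail_start W + 1 + k"]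
    by (intro continuous_at_imp_continuous_on ballI continuous_intros isCont_o2[OF _ isCont_phi]) auto
  then have "\<forall>\<^sub>F n in sequentially. continuous_on S (\<lambda>v. \<Sum>k<n. Re (sym_pair \<phi> (tail_start W + 1 + k) v))"
    by (intro always_eventually allI continuous_on_sum) blast
  ultimately have "continuous_on S (tail_sum W)"
    by (intro uniform_limit_theorem[where F = sequentially]) auto
  moreover have "open S"
    unfolding S_def by (intro open_Collect_less continuous_intros)
  ultimately show ?thesis
    using assms continuous_on_eq_continuous_at by (auto simp: S_def)
qed

lemma hcont_at_hsumZ:
  assumes p: "hvalid p"
  shows "hcont_at (hsumZ F) p"
proof -
  define W where "W = \<bar>Re (hpt_pos p)\<bar> + 1"
  define N where "N = tail_start W"
  have near: "\<bar>Re (hpt_pos q)\<bar> \<le> W" if "q \<in> hnbhd p 1" for q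
    using hnbhd_imp_dist_pos[OF that] abs_Re_le_cmod[of "hpt_pos q - hpt_pos p"] by (simp add: W_def)
  have "hcont_at (\<lambda>q. hsumZ_part F q N + tail_sum W (hpt_pos q)) p"
  proof (intro hcont_at_add hcont_at_hsumZ_part hcont_at_compose_pos)
    show "hcont_at F (hpt_translate k p)" for k
      using p by (intro hcont_F) simp
    show "isCont (tail_sum W) (hpt_pos p)"
      by (rule isCont_tail_sum) (simp add: W_def)
  qed
  then show ?thesis
  proof (rule hcont_at_cong[OF _ zero_less_one])
    show "hsumZ F q = hsumZ_part F q N + tail_sum W (hpt_pos q)" if "q \<in> hnbhd p 1" for q
      using hsumZ_eq_tail hnbhd_imp_hvalid[OF that] near[OF that] by (simp add: N_def)
    show "hsumZ F p = hsumZ_part F p N + tail_sum W (hpt_pos p)"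
      using hsumZ_eq_tail p by (simp add: N_def W_def)
  qed
qed

lemma hsumZ_Up_reduce:
  assumes "Im z > 0"
  obtains z' where "Im z' = Im z" "\<bar>Re z'\<bar> \<le> 1/2" "hsumZ F (Up z) = hsumZ F (Up z')"
proof
  define k where "k = \<lfloor>Re z + 1/2\<rfloor>"
  have "real_of_int k \<le> Re z + 1/2" "Re z + 1/2 < real_of_int k + 1"
    unfolding k_def by linarith+
  then have "\<bar>Re z - of_int k\<bar> \<le> 1/2"
    by (intro abs_leI) linarith+
  then show "Im (z - of_int k) = Im z" "\<bar>Re (z - of_int k)\<bar> \<le> 1/2"
    by simp_all
  have "Up z = hpt_translate k (Up (z - of_int k))"
    by simp
  then show "hsumZ F (Up z) = hsumZ F (Up (z - of_int k))"
    using hsumZ_translate[of "Up (z - of_int k)" k] assms by simp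
qed

lemma abs_hsumZ_part_Up_le:
  assumes "Im z > 0" "\<And>n::int. \<bar>Re (\<phi> (z - of_int n))\<bar> \<le> E"
  shows "\<bar>hsumZ_part F (Up z) N\<bar> \<le> real (2 * N + 1) * E"
proof -
  have "\<bar>hsumZ_part F (Up z) N\<bar> \<le> (\<Sum>n = - int N..int N. \<bar>Re (\<phi> (z - of_int n))\<bar>)"
    unfolding hsumZ_part_def using assms(1) by (simp add: F_Up sum_abs)
  also have "\<dots> \<le> real (card {- int N..int N}) * E"
    using assms(2) by (rule sum_bounded_above)
  also have "card {- int N..int N} = 2 * N + 1"
    by simp
  finally show ?thesis .
qed

lemma abs_tail_sum_le:
  assumes M: "\<And>z. Im z > 0 \<Longrightarrow> \<bar>Re (\<phi> z)\<bar> \<le> M" and W: "\<bar>Re w\<bar> \<le> W"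
  shows "\<bar>tail_sum W w\<bar> \<le> (\<Sum>k. (8 * W * radius + 32 * radius\<^sup>2) * M / ((real k + 1)\<^sup>2 + (Im w)\<^sup>2))"
    and "\<bar>tail_sum W w\<bar> \<le> (8 * W * radius + 32 * radius\<^sup>2) * M * pi\<^sup>2 / 6"
proof -
  define D where "D = (8 * W * radius + 32 * radius\<^sup>2) * M"
  have "D \<ge> 0"
    using W M[of \<i>] radius_pos by (simp add: D_def)
  have le: "D / ((real k + 1)\<^sup>2 + (Im w)\<^sup>2) \<le> D / (real k + 1)\<^sup>2" for k
    using \<open>D \<ge> 0\<close> by (intro frac_le) (auto simp: add_pos_nonneg)
  have bound: "norm (Re (sym_pair \<phi> (tail_start W + 1 + k) w)) \<le> D / ((real k + 1)\<^sup>2 + (Im w)\<^sup>2)" for k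
    using tail_bounds(1)[OF M W] by (simp add: D_def)
  have "norm (D / ((real k + 1)\<^sup>2 + (Im w)\<^sup>2)) \<le> D / (real k + 1)\<^sup>2" for k
    using le[of k] \<open>D \<ge> 0\<close> by simp
  then have "summable (\<lambda>k. D / ((real k + 1)\<^sup>2 + (Im w)\<^sup>2))"
    by (rule inverse_square_bound(1))
  from norm_suminf_le[OF bound this]
  show "\<bar>tail_sum W w\<bar> \<le> (\<Sum>k. (8 * W * radius + 32 * radius\<^sup>2) * M / ((real k + 1)\<^sup>2 + (Im w)\<^sup>2))"
    by (simp add: tail_sum_def D_def)
  have "norm (Re (sym_pair \<phi> (tail_start W + 1 + k) w)) \<le> D / (real k + 1)\<^sup>2" for k
    using bound[of k] le[of k] by linarith
  from inverse_square_bound(2)[OF this]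
  show "\<bar>tail_sum W w\<bar> \<le> (8 * W * radius + 32 * radius\<^sup>2) * M * pi\<^sup>2 / 6"
    by (simp add: tail_sum_def D_def)
qed

lemma abs_Re_sumZ_le:
  assumes M: "\<And>w. Im w > 0 \<Longrightarrow> \<bar>Re (\<phi> w)\<bar> \<le> M" and z: "Im z > 0"
  shows "\<bar>Re (sumZ \<phi> z)\<bar> \<le> sumZ_bound radius * M"
proof -
  obtain z' where z': "Im z' = Im z" "\<bar>Re z'\<bar> \<le> 1/2" "hsumZ F (Up z) = hsumZ F (Up z')"
    using hsumZ_Up_reduce[OF z] by blast
  then have "hsumZ F (Up z) = hsumZ_part F (Up z') (tail_start (1/2)) + tail_sum (1/2) z'"
    using hsumZ_eq_tail[of "Up z'"] z by simp
  moreover have "\<bar>hsumZ_part F (Up z') (tail_start (1/2))\<bar> \<le> real (2 * tail_start (1/2) + 1) * M"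
    using z z' M by (intro abs_hsumZ_part_Up_le) auto
  moreover have "\<bar>tail_sum (1/2) z'\<bar> \<le> (4 * radius + 32 * radius\<^sup>2) * M * pi\<^sup>2 / 6"
    using abs_tail_sum_le(2)[OF M z'(2)] by simp
  ultimately have "\<bar>hsumZ F (Up z)\<bar> \<le> real (2 * tail_start (1/2) + 1) * M + (4 * radius + 32 * radius\<^sup>2) * M * pi\<^sup>2 / 6"
    by linarith
  also have "\<dots> = sumZ_bound radius * M"
    by (simp add: sumZ_bound_def tail_start_def algebra_simps)
  finally show ?thesis
    using hsumZ_Up[OF z] by simp
qed

lemma tail_sum_at_top:
  assumes "r > 0" "W \<ge> 0"
  shows "\<exists>Y. \<forall>w. \<bar>Re w\<bar> \<le> W \<longrightarrow> Im w \<ge> Y \<longrightarrow> \<bar>tail_sum W w\<bar> < r"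
proof -
  obtain M where M: "\<And>z. Im z > 0 \<Longrightarrow> \<bar>Re (\<phi> z)\<bar> \<le> M"
    using Re_phi_bounded by blast
  define D where "D = (8 * W * radius + 32 * radius\<^sup>2) * M"
  have "D \<ge> 0"
    using M[of \<i>] radius_pos \<open>W \<ge> 0\<close> by (simp add: D_def)
  obtain Y where Y: "\<And>y. y \<ge> Y \<Longrightarrow> \<bar>\<Sum>k. D / ((real k + 1)\<^sup>2 + y\<^sup>2)\<bar> < r"
    using tendstoD[OF inverse_square_sum_tendsto_0[OF \<open>D \<ge> 0\<close>] \<open>r > 0\<close>]
    unfolding eventually_at_top_linorder by auto
  have "\<bar>tail_sum W w\<bar> < r" if "\<bar>Re w\<bar> \<le> W" "Im w \<ge> Y" for w
    using abs_tail_sum_le(1)[OF M that(1)] Y[OF that(2)] by (simp add: D_def)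
  then show ?thesis
    by blast
qed

lemma Re_sumZ_at_top:
  assumes "r > 0"
  shows "\<exists>Y. \<forall>z. Im z > Y \<longrightarrow> \<bar>Re (sumZ \<phi> z)\<bar> < r"
proof -
  define N where "N = tail_start (1/2)"
  obtain Y1 where Y1: "\<And>w. \<bar>Re w\<bar> \<le> 1/2 \<Longrightarrow> Im w \<ge> Y1 \<Longrightarrow> \<bar>tail_sum (1/2) w\<bar> < r/2"
    using tail_sum_at_top[of "r/2" "1/2"] assms by auto
  define K where "K = real (2 * N + 1)"
  define e where "e = r / 2 / K"
  have "K > 0" "e > 0"
    using assms by (simp_all add: K_def e_def)
  obtain Y2 where Y2: "\<And>w. Y2 \<le> norm w \<Longrightarrow> norm (\<phi> w) < e"
    using tendstoD[OF tendsto_zero \<open>e > 0\<close>] unfolding eventually_at_infinity by auto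
  have "\<bar>Re (sumZ \<phi> z)\<bar> < r" if z: "Im z > max (max Y1 Y2) 0" for z
  proof -
    obtain z' where z': "Im z' = Im z" "\<bar>Re z'\<bar> \<le> 1/2" "hsumZ F (Up z) = hsumZ F (Up z')"
      using hsumZ_Up_reduce z by auto
    have "\<bar>Re (\<phi> (z' - of_int n))\<bar> \<le> e" for n :: int
      using Y2[of "z' - of_int n"] z z' abs_Im_le_cmod[of "z' - of_int n"] abs_Re_le_cmod[of "\<phi> (z' - of_int n)"]
      by simp
    then have "\<bar>hsumZ_part F (Up z') N\<bar> \<le> K * e"
      unfolding K_def using z z' by (intro abs_hsumZ_part_Up_le) auto
    also have "\<dots> = r/2"
      using \<open>K > 0\<close> by (simp add: e_def)
    finally have "\<bar>hsumZ_part F (Up z') N\<bar> \<le> r/2" .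
    moreover have "\<bar>tail_sum (1/2) z'\<bar> < r/2"
      using Y1 z z' by simp
    moreover have "hsumZ F (Up z') = hsumZ_part F (Up z') N + tail_sum (1/2) z'"
      using hsumZ_eq_tail[of "Up z'"] z z' by (simp add: N_def)
    ultimately show ?thesis
      using z' hsumZ_Up[of z] z by simp
  qed
  then show ?thesis
    by blast
qed

end

theorem proposition5p7:
  fixes a b :: real
  assumes "a < b"
  shows "\<exists>C::real. \<forall>\<phi>. \<phi> \<in> ChatR a b \<longrightarrow>
     (\<forall>z. Im z > 0 \<longrightarrow> convergent (sumZ_part \<phi> z))
   \<and> (\<exists>B. \<forall>z. Im z > 0 \<longrightarrow> \<bar>Re (sumZ \<phi> z)\<bar> \<le> B)
   \<and> (\<exists>G L. (\<forall>z. Im z > 0 \<longrightarrow> G (Up z) = Re (sumZ \<phi> z))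
          \<and> (\<forall>p. hvalid p \<longrightarrow> G (hshift p) = G p)
          \<and> (\<forall>p. hvalid p \<longrightarrow> hcont_at G p)
          \<and> (\<forall>r>0. \<exists>M. \<forall>z. Im z > M \<longrightarrow> \<bar>Re (sumZ \<phi> z) - L\<bar> < r))
   \<and> (\<forall>M. (\<forall>w. Im w > 0 \<longrightarrow> \<bar>Re (\<phi> w)\<bar> \<le> M) \<longrightarrow>
          (\<forall>z. Im z > 0 \<longrightarrow> \<bar>Re (sumZ \<phi> z)\<bar> \<le> C * M))"
proof (intro exI[of _ "sumZ_bound (\<bar>a\<bar> + \<bar>b\<bar> + 1)"] allI impI, goal_cases)
  case (1 \<phi>)
  then obtain F where "hat_function \<phi> a b F"
    by (rule hat_function_if_ChatR)
  then interpret hat_function \<phi> a b F .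
  obtain M where M: "\<And>z. Im z > 0 \<Longrightarrow> \<bar>Re (\<phi> z)\<bar> \<le> M"
    using Re_phi_bounded by blast
  have "\<forall>r>0. \<exists>Y. \<forall>z. Im z > Y \<longrightarrow> \<bar>Re (sumZ \<phi> z) - 0\<bar> < r"
    using Re_sumZ_at_top by simp
  then show ?case
    using convergent_sumZ_part abs_Re_sumZ_le[OF M] abs_Re_sumZ_le[unfolded radius_def]
      hsumZ_Up hsumZ_hshift hcont_at_hsumZ
    by blast
qed

end
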